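(* Let $A_n=S_n\wr \mathrm{Aut}(\mathcal{T}_d)$ with the cloning maps $\kappa_k^n$ described in the context, and let $\mathscr{T}(S_*\wr\mathrm{Aut}(\mathcal{T}_d))$ be the set of equivalence classes $[T_-,f,T_+]$ of triples described in the context, with the multiplication described there. Then $\mathscr{T}(S_*\wr\mathrm{Aut}(\mathcal{T}_d))$ is a group, and the map $[T_-,f,T_+]\mapsto ((T_-,f,T_+))$ is a well-defined group isomorphism $\mathscr{T}(S_*\wr\mathrm{Aut}(\mathcal{T}_d))\cong \mathrm{AAut}(\mathcal{T}_d)$.
   Context: Fix $d\ge 2$ and the alphabet $X=\{1,\dots,d\}$; $\mathcal{T}_d$ is the infinite rooted $d$-ary tree with vertex set the set $X^*$ of finite words (root the empty word, $u$ adjacent to $ux$ for $x\in X$), and $\partial\mathcal{T}_d$ its boundary (infinite words). Permutations act on the left, and $\sigma\tau$ means first $\tau$ then $\sigma$. For a group $G$, $S_n\wr G=S_n\ltimes G^n$ with elements written $\sigma(g_1,\dots,g_n)$ and multiplication $\sigma(f_1,\dots,f_n)\,\tau(g_1,\dots,g_n)=\sigma\tau(f_{\tau(1)}g_1,\dots,f_{\tau(n)}g_n)$. Every $f\in\mathrm{Aut}(\mathcal{T}_d)$ has a unique wreath recursion $f=\rho(f)(f_1,\dots,f_d)$, where $\rho(f)\in S_d$ and $f_x\in\mathrm{Aut}(\mathcal{T}_d)$ (the state of $f$ at $x$) satisfy $f(xw)=\rho(f)(x)\,f_x(w)$ for $x\in X$, $w\in X^*$. Almost-automorphisms: a finite rooted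 complete subtree of $\mathcal{T}_d$ is a finite subtree containing the root in which each vertex has either $0$ or all $d$ of its children; its leaves are ordered left to right (lexicographically). If $T_-,T_+$ are such subtrees each with $n$ leaves ($u_1,\dots,u_n$ the leaves of $T_-$, $v_1,\dots,v_n$ those of $T_+$), $\sigma\in S_n$, $f_i\in\mathrm{Aut}(\mathcal{T}_d)$, then $((T_-,\sigma(f_1,\dots,f_n),T_+))$ denotes the homeomorphism of $\partial\mathcal{T}_d$ sending $v_iw\mapsto u_{\sigma(i)}f_i(w)$. $\mathrm{AAut}(\mathcal{T}_d)$ is the group of all such homeomorphisms. Symmetric cloning maps: for $1\le k\le n$ and $\sigma\in S_n$, $(\sigma)\varsigma_k^n\in S_{n+d-1}$ is defined by: for $i<k$, $i\mapsto\sigma(i)$ if $\sigma(i)<\sigma(k)$ and $i\mapsto\sigma(i)+d-1$ if $\sigma(i)>\sigma(k)$; for $k\le i\le k+d-1$, $i\mapsto \sigma(k)+i-k$; for $i>k+d-1$, $i\mapsto\sigma(i-d+1)$ if $\sigma(i-d+1)<\sigma(k)$ and $i\mapsto \sigma(i-d+1)+d-1$ if $\sigma(i-d+1)>\sigma(k)$. For $\tau\in S_d$ let $\tau^{(k)}\in S_{n+d-1}$ be the permutation sending $k+j-1\mapsto k+\tau(j)-1$ for $1\le j\le d$ and fixing all other points. Define $\rho_n(\sigma(f_1,\dots,f_n))=\sigma$ and $\kappa_k^n:A_n\to A_{n+d-1}$ by $(\sigma(f_1,\dots,f_n))\kappa_k^n=(\sigma)\varsigma_k^n\,\rho(f_k)^{(k)}\,(f_1,\dots,f_{k-1},f_k^1,\dots,f_k^d,f_{k+1},\dots,f_n)$,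 where $f_k=\rho(f_k)(f_k^1,\dots,f_k^d)$ is the wreath recursion. Thompson group $\mathscr{T}(S_*\wr G)$ for $G\le\mathrm{Aut}(\mathcal{T}_d)$ with $\kappa_k^n(S_n\wr G)\subseteq S_{n+d-1}\wr G$: consider triples $(T_-,g,T_+)$ with $T_\pm$ finite rooted complete subtrees of $\mathcal{T}_d$ with the same number $n$ of leaves and $g\in S_n\wr G$. An expansion of $(T_-,g,T_+)$ is $(T_-',(g)\kappa_k^n,T_+')$ where $T_+'$ is $T_+$ with a $d$-caret (the $d$ children) added at its $k$th leaf and $T_-'$ is $T_-$ with a $d$-caret added at its $\rho_n(g)(k)$th leaf; reductions are the inverses. $[T_-,g,T_+]$ denotes the class under the equivalence relation generated by expansions. The product of two classes is computed by choosing representatives $(T_-,f,T_+)$, $(U_-,g,U_+)$ with $T_+=U_-$ (always possible by expanding) and setting $[T_-,f,T_+][U_-,g,U_+]=[T_-,fg,U_+]$. *)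

theory Defs
  imports "HOL-Algebra.Group" "HOL-Combinatorics.Permutations" "HOL-Library.List_Lexorder"
begin

definition words :: "nat \<Rightarrow> nat list set" where
  "words d = {w. set w \<subseteq> {1..d}}"

definition tree_adj :: "nat list \<Rightarrow> nat list \<Rightarrow> bool" where
  "tree_adj u v \<longleftrightarrow> (\<exists>x. v = u @ [x]) \<or> (\<exists>x. u = v @ [x])"

text \<open>Automorphisms of the rooted tree T_d, represented extensionally as
  maps on all lists that are the identity outside the vertex set.\<close>
definition tree_aut :: "nat \<Rightarrow> (nat list \<Rightarrow> nat list) \<Rightarrow> bool" where
  "tree_aut d f \<longleftrightarrow> bij_betw f (words d) (words d) \<and> f [] = []
     \<and> (\<forall>u\<in>words d. \<forall>v\<in>words d. tree_adj u v \<longleftrightarrow> tree_adj (f u) (f v))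
     \<and> (\<forall>w. w \<notin> words d \<longrightarrow> f w = w)"

text \<open>Wreath recursion f = rho(f) (f_1,...,f_d): f(x w) = rho(f)(x) f_x(w).\<close>
definition aut_rho :: "nat \<Rightarrow> (nat list \<Rightarrow> nat list) \<Rightarrow> nat \<Rightarrow> nat" where
  "aut_rho d f x = (if x \<in> {1..d} then hd (f [x]) else x)"

definition aut_state :: "(nat list \<Rightarrow> nat list) \<Rightarrow> nat \<Rightarrow> nat list \<Rightarrow> nat list" where
  "aut_state f x = (\<lambda>w. tl (f (x # w)))"

definition complete_subtree :: "nat \<Rightarrow> nat list set \<Rightarrow> bool" where
  "complete_subtree d T \<longleftrightarrow> finite T \<and> [] \<in> T \<and> T \<subseteq> words d
     \<and> (\<forall>u x. u @ [x] \<in> T \<longrightarrow> u \<in> T)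
     \<and> (\<forall>u\<in>T. (\<forall>x\<in>{1..d}. u @ [x] \<notin> T) \<or> (\<forall>x\<in>{1..d}. u @ [x] \<in> T))"

definition leaves :: "nat \<Rightarrow> nat list set \<Rightarrow> nat list set" where
  "leaves d T = {u \<in> T. \<forall>x\<in>{1..d}. u @ [x] \<notin> T}"

definition nleaves :: "nat \<Rightarrow> nat list set \<Rightarrow> nat" where
  "nleaves d T = card (leaves d T)"

text \<open>The i-th leaf (1-based) in left-to-right = lexicographic order.\<close>
definition leaf :: "nat \<Rightarrow> nat list set \<Rightarrow> nat \<Rightarrow> nat list" where
  "leaf d T i = sorted_list_of_set (leaves d T) ! (i - 1)"

definition add_caret :: "nat \<Rightarrow> nat list set \<Rightarrow> nat list \<Rightarrow> nat list set" where
  "add_caret d T u = T \<union> {u @ [x] |x. x \<in> {1..d}}"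

type_synonym wr_elt = "(nat \<Rightarrow> nat) \<times> (nat \<Rightarrow> nat list \<Rightarrow> nat list)"

text \<open>Elements sigma(f_1,...,f_n); the coordinates f_i for i outside {1..n}
  are normalised to id.  Product: sigma(f) tau(g) = sigma tau (f_{tau(i)} g_i).\<close>
definition wr_mult :: "nat \<Rightarrow> wr_elt \<Rightarrow> wr_elt \<Rightarrow> wr_elt" where
  "wr_mult n a b = (case a of (\<sigma>, f) \<Rightarrow> case b of (\<tau>, g) \<Rightarrow>
     (\<sigma> \<circ> \<tau>, \<lambda>i. if i \<in> {1..n} then f (\<tau> i) \<circ> g i else id))"

definition clone_perm :: "nat \<Rightarrow> nat \<Rightarrow> nat \<Rightarrow> (nat \<Rightarrow> nat) \<Rightarrow> nat \<Rightarrow> nat" where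
  "clone_perm d n k \<sigma> i =
    (if 1 \<le> i \<and> i < k then (if \<sigma> i < \<sigma> k then \<sigma> i else \<sigma> i + d - 1)
     else if k \<le> i \<and> i \<le> k + d - 1 then \<sigma> k + i - k
     else if k + d - 1 < i \<and> i \<le> n + d - 1 then
       (if \<sigma> (i - d + 1) < \<sigma> k then \<sigma> (i - d + 1) else \<sigma> (i - d + 1) + d - 1)
     else i)"

definition local_perm :: "nat \<Rightarrow> nat \<Rightarrow> (nat \<Rightarrow> nat) \<Rightarrow> nat \<Rightarrow> nat" where
  "local_perm d k \<tau> i = (if k \<le> i \<and> i \<le> k + d - 1 then k + \<tau> (i - k + 1) - 1 else i)"

definition kappa :: "nat \<Rightarrow> nat \<Rightarrow> nat \<Rightarrow> wr_elt \<Rightarrow> wr_elt" where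
  "kappa d n k g = (case g of (\<sigma>, fs) \<Rightarrow>
     (clone_perm d n k \<sigma> \<circ> local_perm d k (aut_rho d (fs k)),
      \<lambda>i. if 1 \<le> i \<and> i < k then fs i
          else if k \<le> i \<and> i \<le> k + d - 1 then aut_state (fs k) (i - k + 1)
          else if k + d - 1 < i \<and> i \<le> n + d - 1 then fs (i - d + 1)
          else id))"

type_synonym triple = "nat list set \<times> wr_elt \<times> nat list set"

definition triple_ok :: "nat \<Rightarrow> triple \<Rightarrow> bool" where
  "triple_ok d t = (case t of (Tm, (\<sigma>, fs), Tp) \<Rightarrow>
     complete_subtree d Tm \<and> complete_subtree d Tp \<and> nleaves d Tm = nleaves d Tp
     \<and> \<sigma> permutes {1..nleaves d Tp}
     \<and> (\<forall>i\<in>{1..nleaves d Tp}. tree_aut d (fs i))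
     \<and> (\<forall>i. i \<notin> {1..nleaves d Tp} \<longrightarrow> fs i = id))"

definition expansion :: "nat \<Rightarrow> triple \<Rightarrow> triple \<Rightarrow> bool" where
  "expansion d t t' \<longleftrightarrow> triple_ok d t \<and>
     (case t of (Tm, g, Tp) \<Rightarrow>
       \<exists>k\<in>{1..nleaves d Tp}.
          t' = (add_caret d Tm (leaf d Tm (fst g k)),
                kappa d (nleaves d Tp) k g,
                add_caret d Tp (leaf d Tp k)))"

definition tclass :: "nat \<Rightarrow> triple \<Rightarrow> triple set" where
  "tclass d t = {t'. equivclp (expansion d) t t'}"

definition tmult :: "nat \<Rightarrow> triple set \<Rightarrow> triple set \<Rightarrow> triple set" where
  "tmult d X Y = (SOME Z. \<exists>Tm f T g Tp. (Tm, f, T) \<in> X \<and> (T, g, Tp) \<in> Y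
       \<and> Z = tclass d (Tm, wr_mult (nleaves d T) f g, Tp))"

definition Thompson :: "nat \<Rightarrow> triple set monoid" where
  "Thompson d = \<lparr>carrier = {tclass d t |t. triple_ok d t},
                 monoid.mult = tmult d,
                 one = tclass d ({[]}, (id, \<lambda>i. id), {[]})\<rparr>"

definition boundary :: "nat \<Rightarrow> (nat \<Rightarrow> nat) set" where
  "boundary d = {\<xi>. \<forall>k. \<xi> k \<in> {1..d}}"

definition is_prefix :: "nat list \<Rightarrow> (nat \<Rightarrow> nat) \<Rightarrow> bool" where
  "is_prefix v \<xi> \<longleftrightarrow> (\<forall>j<length v. \<xi> j = v ! j)"

definition conc :: "nat list \<Rightarrow> (nat \<Rightarrow> nat) \<Rightarrow> nat \<Rightarrow> nat" where
  "conc v w = (\<lambda>k. if k < length v then v ! k else w (k - length v))"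

definition sdrop :: "nat \<Rightarrow> (nat \<Rightarrow> nat) \<Rightarrow> nat \<Rightarrow> nat" where
  "sdrop m \<xi> = (\<lambda>k. \<xi> (k + m))"

definition aut_bd :: "(nat list \<Rightarrow> nat list) \<Rightarrow> (nat \<Rightarrow> nat) \<Rightarrow> nat \<Rightarrow> nat" where
  "aut_bd f \<xi> = (\<lambda>k. f (map \<xi> [0..<Suc k]) ! k)"

text \<open>((T_-, sigma(f_1..f_n), T_+)): v_i w maps to u_{sigma(i)} f_i(w) on the boundary,
  extended by the identity off the boundary.\<close>
definition aa :: "nat \<Rightarrow> triple \<Rightarrow> (nat \<Rightarrow> nat) \<Rightarrow> nat \<Rightarrow> nat" where
  "aa d t \<xi> = (case t of (Tm, (\<sigma>, fs), Tp) \<Rightarrow>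
     if \<xi> \<in> boundary d then
       (let i = (THE i. i \<in> {1..nleaves d Tp} \<and> is_prefix (leaf d Tp i) \<xi>)
        in conc (leaf d Tm (\<sigma> i)) (aut_bd (fs i) (sdrop (length (leaf d Tp i)) \<xi>)))
     else \<xi>)"

definition AAut :: "nat \<Rightarrow> ((nat \<Rightarrow> nat) \<Rightarrow> nat \<Rightarrow> nat) set" where
  "AAut d = {aa d (Tm, (\<sigma>, fs), Tp) |Tm \<sigma> fs Tp.
      complete_subtree d Tm \<and> complete_subtree d Tp \<and> nleaves d Tm = nleaves d Tp
      \<and> \<sigma> permutes {1..nleaves d Tp} \<and> (\<forall>i\<in>{1..nleaves d Tp}. tree_aut d (fs i))}"

definition AAutG :: "nat \<Rightarrow> ((nat \<Rightarrow> nat) \<Rightarrow> nat \<Rightarrow> nat) monoid" where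
  "AAutG d = \<lparr>carrier = AAut d, monoid.mult = (\<circ>), one = id\<rparr>"

end

theory Submission
  imports Defs
begin

text \<open>An expansion replaces the k-th leaf
  of T_+ by its d children and splits the k-th state by its wreath recursion, so it does not
  change the action; hence aa is constant on classes. Conversely, any two triples can be
  expanded to a common domain tree T_+, and for d \<ge> 2 a triple with a given domain tree is
  determined by its action, so two triples are equivalent exactly when they act alike.
  Representatives with matching middle tree multiply to the composite action, so the class map
  is a multiplicative bijection onto AAut, which is a group under composition, and the group
  structure of the Thompson group is pulled back along it.\<close>

section \<open>Words and tree automorphisms\<close>

lemma words_Nil[simp]: "[] \<in> words d" by (simp add: words_def)
lemma words_Cons[simp]: "x # w \<in> words d \<longleftrightarrow> x \<in> {1..d} \<and> w \<in> words d"
  by (auto simp add: words_def)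
lemma words_append[simp]: "u @ v \<in> words d \<longleftrightarrow> u \<in> words d \<and> v \<in> words d"
  by (auto simp add: words_def)
lemma words_nth: "w \<in> words d \<Longrightarrow> i < length w \<Longrightarrow> w ! i \<in> {1..d}"
  using nth_mem[of i w] subsetD unfolding words_def by (metis mem_Collect_eq)

lemma tree_adj_Cons: "tree_adj (a # u) (a # v) \<longleftrightarrow> tree_adj u v"
  by (auto simp add: tree_adj_def)

lemma tree_aut_id: "tree_aut d id"
  by (simp add: tree_aut_def)

lemma tree_aut_bij: "tree_aut d f \<Longrightarrow> bij_betw f (words d) (words d)"
  by (simp add: tree_aut_def)

lemma tree_aut_words: "tree_aut d f \<Longrightarrow> w \<in> words d \<Longrightarrow> f w \<in> words d"
  using bij_betw_apply[OF tree_aut_bij] by blast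

lemma tree_aut_inj: "tree_aut d f \<Longrightarrow> u \<in> words d \<Longrightarrow> v \<in> words d \<Longrightarrow> f u = f v \<Longrightarrow> u = v"
  using tree_aut_bij[of d f] unfolding bij_betw_def inj_on_def by blast

lemma tree_aut_adj: "tree_aut d f \<Longrightarrow> u \<in> words d \<Longrightarrow> v \<in> words d \<Longrightarrow> tree_adj (f u) (f v) = tree_adj u v"
  by (simp add: tree_aut_def)

lemma tree_aut_out: "tree_aut d f \<Longrightarrow> w \<notin> words d \<Longrightarrow> f w = w"
  by (simp add: tree_aut_def)

lemma tree_aut_Nil: "tree_aut d f \<Longrightarrow> f [] = []"
  by (simp add: tree_aut_def)

lemma tree_aut_length:
  assumes f: "tree_aut d f"
  shows "w \<in> words d \<Longrightarrow> length (f w) = length w"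
proof (induction "length w" arbitrary: w rule: less_induct)
  case less
  show ?case
  proof (cases w rule: rev_cases)
    case Nil then show ?thesis using tree_aut_Nil[OF f] by simp
  next
    case (snoc u x)
    have u: "u \<in> words d" using less.prems snoc by simp
    have lu: "length (f u) = length u" using less.hyps[of u] u snoc by simp
    have "tree_adj u w" using snoc by (auto simp: tree_adj_def)
    then have "tree_adj (f u) (f w)" using tree_aut_adj[OF f u less(2)] by simp
    then consider y where "f w = f u @ [y]" | y where "f u = f w @ [y]" by (auto simp: tree_adj_def)
    then show ?thesis
    proof cases
      case 1 then show ?thesis using lu snoc by simp
    next
      case (2 y)
      show ?thesis
      proof (cases u rule: rev_cases)
        case Nil then show ?thesis using lu 2 by simp
      next
        case (snoc p z)
        have p: "p \<in> words d" using u snoc by auto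
        have lp: "length (f p) = length p" using less.hyps[of p] p snoc \<open>w = u @ [x]\<close> by simp
        have "tree_adj p u" using snoc by (auto simp: tree_adj_def)
        then have "tree_adj (f p) (f u)" using tree_aut_adj[OF f p u] by simp
        then consider y' where "f u = f p @ [y']" | y' where "f p = f u @ [y']" by (auto simp: tree_adj_def)
        then have "f p = f w"
        proof cases
          case 1 then show ?thesis using 2 by simp
        next
          case 3: 2 then have False using lp lu snoc by simp
          then show ?thesis ..
        qed
        then have "p = w" using tree_aut_inj[OF f p less(2)] by simp
        then show ?thesis using snoc \<open>w = u @ [x]\<close> by simp
      qed
    qed
  qed
qed


lemma tree_aut_snoc:
  assumes f: "tree_aut d f" and w: "u @ [x] \<in> words d"
  shows "\<exists>y. f (u @ [x]) = f u @ [y]"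
proof -
  have u: "u \<in> words d" using w by simp
  have "tree_adj u (u @ [x])" by (auto simp: tree_adj_def)
  then have "tree_adj (f u) (f (u @ [x]))" using tree_aut_adj[OF f u w] by simp
  moreover have "length (f (u @ [x])) = Suc (length (f u))"
    using tree_aut_length[OF f u] tree_aut_length[OF f w] by simp
  ultimately show ?thesis by (auto simp: tree_adj_def)
qed

lemma tree_aut_prefix:
  assumes f: "tree_aut d f" and w: "u @ v \<in> words d"
  shows "take (length u) (f (u @ v)) = f u"
  using w
proof (induction v rule: rev_induct)
  case Nil
  then show ?case using tree_aut_length[OF f, of u] by simp
next
  case (snoc x v)
  have w1: "u @ v \<in> words d" using snoc.prems by simp
  obtain y where "f ((u @ v) @ [x]) = f (u @ v) @ [y]"
    using tree_aut_snoc[OF f, of "u @ v" x] snoc.prems by auto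
  moreover have "length (f (u @ v)) = length u + length v" using tree_aut_length[OF f w1] by simp
  ultimately show ?case using snoc.IH[OF w1] by simp
qed

lemma tree_aut_single:
  assumes f: "tree_aut d f" and x: "x \<in> {1..d}"
  shows "f [x] = [aut_rho d f x]" "aut_rho d f x \<in> {1..d}"
proof -
  have xw: "[x] \<in> words d" using x by simp
  have "length (f [x]) = 1" using tree_aut_length[OF f xw] by simp
  then obtain y where y: "f [x] = [y]" by (metis One_nat_def length_0_conv length_Suc_conv)
  then show "f [x] = [aut_rho d f x]" using x by (simp add: aut_rho_def)
  have "f [x] \<in> words d" using tree_aut_words[OF f xw] .
  then show "aut_rho d f x \<in> {1..d}" using y x by (simp add: aut_rho_def)
qed

lemma aut_rho_inj:
  assumes f: "tree_aut d f" and x: "x \<in> {1..d}" and y: "y \<in> {1..d}"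
    and eq: "aut_rho d f x = aut_rho d f y"
  shows "x = y"
proof -
  have "f [x] = f [y]" using tree_aut_single[OF f x] tree_aut_single[OF f y] eq by simp
  then show ?thesis using tree_aut_inj[OF f, of "[x]" "[y]"] x y by simp
qed

lemma aut_rho_permutes:
  assumes f: "tree_aut d f"
  shows "aut_rho d f permutes {1..d}"
proof (rule bij_imp_permutes)
  have inj: "inj_on (aut_rho d f) {1..d}"
    using aut_rho_inj[OF f] by (meson inj_onI)
  moreover have "aut_rho d f ` {1..d} \<subseteq> {1..d}" using tree_aut_single(2)[OF f] by auto
  ultimately have "aut_rho d f ` {1..d} = {1..d}" using endo_inj_surj[of "{1..d}"] by simp
  then show "bij_betw (aut_rho d f) {1..d} {1..d}" using inj by (simp add: bij_betw_def)
  show "x \<notin> {1..d} \<Longrightarrow> aut_rho d f x = x" for x unfolding aut_rho_def by presburger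
qed

lemma tree_aut_Cons:
  assumes f: "tree_aut d f" and x: "x \<in> {1..d}" and w: "w \<in> words d"
  shows "f (x # w) = aut_rho d f x # aut_state f x w"
proof -
  have xw: "[x] @ w \<in> words d" using x w by simp
  have "take 1 (f ([x] @ w)) = [aut_rho d f x]"
    using tree_aut_prefix[OF f xw] tree_aut_single[OF f x] by simp
  moreover have "length (f (x # w)) = Suc (length w)" using tree_aut_length[OF f] xw by simp
  ultimately show ?thesis unfolding aut_state_def
    by (cases "f (x # w)") auto
qed

lemma aut_state_out:
  assumes f: "tree_aut d f" and w: "w \<notin> words d"
  shows "aut_state f x w = w"
proof -
  have "x # w \<notin> words d" using w by simp
  then show ?thesis using tree_aut_out[OF f] by (simp add: aut_state_def)
qed

lemma aut_state_words:
  assumes f: "tree_aut d f" and x: "x \<in> {1..d}" and w: "w \<in> words d"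
  shows "aut_state f x w \<in> words d"
proof -
  have "f (x # w) \<in> words d" using tree_aut_words[OF f] x w by simp
  then show ?thesis using tree_aut_Cons[OF f x w] by simp
qed

lemma tree_aut_state:
  assumes f: "tree_aut d f" and x: "x \<in> {1..d}"
  shows "tree_aut d (aut_state f x)"
proof -
  let ?g = "aut_state f x"
  have inj: "inj_on ?g (words d)"
  proof (rule inj_onI)
    fix u v assume u: "u \<in> words d" and v: "v \<in> words d" and e: "?g u = ?g v"
    then have "f (x # u) = f (x # v)" using tree_aut_Cons[OF f x] by simp
    then show "u = v" using tree_aut_inj[OF f, of "x#u" "x#v"] u v x by simp
  qed
  have sub: "?g ` words d \<subseteq> words d" using aut_state_words[OF f x] by auto
  have sup: "words d \<subseteq> ?g ` words d"
  proof
    fix w' assume w': "w' \<in> words d"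
    have "aut_rho d f x # w' \<in> words d" using w' tree_aut_single(2)[OF f x] by simp
    then obtain z where z: "z \<in> words d" "f z = aut_rho d f x # w'"
      using tree_aut_bij[OF f] unfolding bij_betw_def by (metis imageE)
    then obtain y w where zw: "z = y # w" using tree_aut_Nil[OF f] by (cases z) auto
    have y: "y \<in> {1..d}" and w: "w \<in> words d" using z zw by auto
    have "aut_rho d f y = aut_rho d f x" "aut_state f y w = w'"
      using tree_aut_Cons[OF f y w] z zw by auto
    then have "y = x" using aut_rho_inj[OF f y x] by simp
    then show "w' \<in> ?g ` words d" using \<open>aut_state f y w = w'\<close> w by blast
  qed
  have adj: "tree_adj u v \<longleftrightarrow> tree_adj (?g u) (?g v)" if u: "u \<in> words d" and v: "v \<in> words d" for u v
  proof -
    have "tree_adj u v \<longleftrightarrow> tree_adj (x # u) (x # v)" by (simp add: tree_adj_Cons)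
    also have "\<dots> \<longleftrightarrow> tree_adj (f (x # u)) (f (x # v))" using tree_aut_adj[OF f, of "x#u" "x#v"] u v x by simp
    also have "\<dots> \<longleftrightarrow> tree_adj (?g u) (?g v)" using tree_aut_Cons[OF f x] u v by (simp add: tree_adj_Cons)
    finally show ?thesis .
  qed
  have nil: "?g [] = []" using tree_aut_Cons[OF f x, of "[]"] tree_aut_single[OF f x] by simp
  have bij: "bij_betw ?g (words d) (words d)" using inj sub sup by (simp add: bij_betw_def)
  show ?thesis unfolding tree_aut_def
  proof (intro conjI ballI allI impI)
    show "bij_betw ?g (words d) (words d)" by (fact bij)
    show "?g [] = []" by (fact nil)
    show "tree_adj u v = tree_adj (?g u) (?g v)" if "u \<in> words d" "v \<in> words d" for u v
      using adj that by simp
    show "?g w = w" if "w \<notin> words d" for w using aut_state_out[OF f that] .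
  qed
qed

lemma tree_aut_comp:
  assumes f: "tree_aut d f" and g: "tree_aut d g"
  shows "tree_aut d (f \<circ> g)"
  unfolding tree_aut_def
proof (intro conjI ballI allI impI)
  show "bij_betw (f \<circ> g) (words d) (words d)"
    using bij_betw_trans[OF tree_aut_bij[OF g] tree_aut_bij[OF f]] .
  show "(f \<circ> g) [] = []" using f g by (simp add: tree_aut_Nil)
  show "tree_adj u v = tree_adj ((f \<circ> g) u) ((f \<circ> g) v)" if "u \<in> words d" "v \<in> words d" for u v
    using that tree_aut_adj[OF f] tree_aut_adj[OF g] tree_aut_words[OF g] by simp
  show "(f \<circ> g) w = w" if "w \<notin> words d" for w using that tree_aut_out[OF f] tree_aut_out[OF g] by simp
qed

definition tree_aut_inv :: "nat \<Rightarrow> (nat list \<Rightarrow> nat list) \<Rightarrow> nat list \<Rightarrow> nat list" where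
  "tree_aut_inv d f = (\<lambda>w. if w \<in> words d then inv_into (words d) f w else w)"

lemma tree_aut_inv_comp:
  assumes f: "tree_aut d f"
  shows "tree_aut_inv d f \<circ> f = id"
proof
  fix w
  show "(tree_aut_inv d f \<circ> f) w = id w"
  proof (cases "w \<in> words d")
    case True
    then show ?thesis using f tree_aut_words[OF f True] unfolding tree_aut_inv_def tree_aut_def bij_betw_def
      by (simp add: inv_into_f_f)
  next
    case False
    then show ?thesis using tree_aut_out[OF f False] by (simp add: tree_aut_inv_def)
  qed
qed

lemma tree_aut_tree_aut_inv:
  assumes f: "tree_aut d f"
  shows "tree_aut d (tree_aut_inv d f)"
proof -
  have b: "bij_betw f (words d) (words d)" using f by (simp add: tree_aut_def)
  have bi: "bij_betw (inv_into (words d) f) (words d) (words d)" using bij_betw_inv_into[OF b] .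
  have fg: "f (tree_aut_inv d f w) = w" if "w \<in> words d" for w
    using that b by (simp add: tree_aut_inv_def bij_betw_inv_into_right)
  have gw: "tree_aut_inv d f w \<in> words d" if "w \<in> words d" for w
    using that bi by (simp add: tree_aut_inv_def bij_betw_apply)
  show ?thesis unfolding tree_aut_def
  proof (intro conjI ballI allI impI)
    show "bij_betw (tree_aut_inv d f) (words d) (words d)"
      using bi by (rule bij_betw_cong[THEN iffD1, rotated]) (simp add: tree_aut_inv_def)
    show "tree_aut_inv d f [] = []" using tree_aut_inv_comp[OF f] tree_aut_Nil[OF f]
      by (metis comp_apply id_apply)
    show "tree_adj u v = tree_adj (tree_aut_inv d f u) (tree_aut_inv d f v)" if "u \<in> words d" "v \<in> words d" for u v
      using tree_aut_adj[OF f gw gw, of u v] fg that by simp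
    show "tree_aut_inv d f w = w" if "w \<notin> words d" for w using that by (simp add: tree_aut_inv_def)
  qed
qed

section \<open>The boundary action of a tree automorphism\<close>

lemma map_upt_Suc_Cons: "map \<xi> [0..<Suc k] = \<xi> 0 # map (\<lambda>i. \<xi> (Suc i)) [0..<k]"
  by (induction k) auto

lemma boundary_map: "\<xi> \<in> boundary d \<Longrightarrow> map \<xi> [0..<m] \<in> words d"
  by (auto simp: boundary_def words_def)

lemma conc_boundary: "v \<in> words d \<Longrightarrow> w \<in> boundary d \<Longrightarrow> conc v w \<in> boundary d"
  using words_nth[of v d] by (auto simp: boundary_def conc_def)

lemma sdrop_boundary: "\<xi> \<in> boundary d \<Longrightarrow> sdrop m \<xi> \<in> boundary d"
  by (auto simp: boundary_def sdrop_def)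

lemma is_prefix_conc: "is_prefix v (conc v w)"
  by (simp add: is_prefix_def conc_def)

lemma sdrop_conc: "sdrop (length v) (conc v w) = w"
  by (simp add: sdrop_def conc_def)

lemma conc_sdrop: "is_prefix v \<xi> \<Longrightarrow> conc v (sdrop (length v) \<xi>) = \<xi>"
  by (auto simp: is_prefix_def conc_def sdrop_def fun_eq_iff)

lemma conc_append: "conc (u @ v) w = conc u (conc v w)"
  by (auto simp: conc_def fun_eq_iff nth_append)

lemma aut_bd_map:
  assumes f: "tree_aut d f" and xi: "\<xi> \<in> boundary d"
  shows "f (map \<xi> [0..<m]) = map (aut_bd f \<xi>) [0..<m]"
proof (induction m)
  case 0 then show ?case using tree_aut_Nil[OF f] by simp
next
  case (Suc m)
  have w: "map \<xi> [0..<m] @ [\<xi> m] \<in> words d" using boundary_map[OF xi, of "Suc m"] by simp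
  obtain y where y: "f (map \<xi> [0..<m] @ [\<xi> m]) = f (map \<xi> [0..<m]) @ [y]"
    using tree_aut_snoc[OF f w] by blast
  have "aut_bd f \<xi> m = y" unfolding aut_bd_def using y Suc by (simp add: nth_append)
  then show ?case using y Suc by simp
qed

lemma aut_bd_boundary:
  assumes f: "tree_aut d f" and xi: "\<xi> \<in> boundary d"
  shows "aut_bd f \<xi> \<in> boundary d"
  unfolding boundary_def
proof (intro CollectI allI)
  fix k
  have w: "f (map \<xi> [0..<Suc k]) \<in> words d" using tree_aut_words[OF f boundary_map[OF xi]] .
  have "length (f (map \<xi> [0..<Suc k])) = Suc k" using tree_aut_length[OF f boundary_map[OF xi, of "Suc k"]] by (simp del: upt_Suc)
  then show "aut_bd f \<xi> k \<in> {1..d}" unfolding aut_bd_def using words_nth[OF w, of k] by (simp del: upt_Suc)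
qed

lemma aut_bd_comp:
  assumes f: "tree_aut d f" and g: "tree_aut d g" and xi: "\<xi> \<in> boundary d"
  shows "aut_bd (f \<circ> g) \<xi> = aut_bd f (aut_bd g \<xi>)"
proof
  fix k
  have "(f \<circ> g) (map \<xi> [0..<Suc k]) = f (map (aut_bd g \<xi>) [0..<Suc k])"
    using aut_bd_map[OF g xi] by (simp del: upt_Suc)
  also have "\<dots> = map (aut_bd f (aut_bd g \<xi>)) [0..<Suc k]"
    using aut_bd_map[OF f aut_bd_boundary[OF g xi]] .
  finally show "aut_bd (f \<circ> g) \<xi> k = aut_bd f (aut_bd g \<xi>) k"
    unfolding aut_bd_def by (simp del: upt_Suc)
qed

lemma aut_bd_id: "aut_bd id \<xi> = \<xi>"
  by (simp add: aut_bd_def fun_eq_iff del: upt_Suc)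

lemma aut_bd_Cons:
  assumes f: "tree_aut d f" and x: "x \<in> {1..d}" and w: "w \<in> boundary d"
  shows "aut_bd f (conc [x] w) = conc [aut_rho d f x] (aut_bd (aut_state f x) w)"
proof
  fix k
  have m: "map (conc [x] w) [0..<Suc k] = x # map w [0..<k]"
    by (simp only: map_upt_Suc_Cons) (simp add: conc_def del: upt_Suc)
  have fx: "f (x # map w [0..<k]) = aut_rho d f x # aut_state f x (map w [0..<k])"
    using tree_aut_Cons[OF f x boundary_map[OF w]] .
  show "aut_bd f (conc [x] w) k = conc [aut_rho d f x] (aut_bd (aut_state f x) w) k"
  proof (cases k)
    case 0 then show ?thesis unfolding aut_bd_def using m fx by (simp add: conc_def del: upt_Suc)
  next
    case (Suc j)
    have "aut_bd f (conc [x] w) k = aut_state f x (map w [0..<k]) ! j"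
      unfolding aut_bd_def using m fx Suc by (simp del: upt_Suc)
    also have "\<dots> = aut_bd (aut_state f x) w j" unfolding aut_bd_def using Suc by (simp del: upt_Suc)
    finally show ?thesis using Suc by (simp add: conc_def)
  qed
qed

lemma aut_bd_determines:
  assumes f: "tree_aut d f" and g: "tree_aut d g" and d: "d \<ge> 1"
    and eq: "\<And>\<xi>. \<xi> \<in> boundary d \<Longrightarrow> aut_bd f \<xi> = aut_bd g \<xi>"
  shows "f = g"
proof
  fix w
  show "f w = g w"
  proof (cases "w \<in> words d")
    case False then show ?thesis using tree_aut_out[OF f] tree_aut_out[OF g] by simp
  next
    case True
    let ?\<xi> = "conc w (\<lambda>_. 1)"
    have one: "(\<lambda>_. 1) \<in> boundary d" using d by (simp add: boundary_def)
    have xi: "?\<xi> \<in> boundary d" using conc_boundary[OF True one] .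
    have mw: "map ?\<xi> [0..<length w] = w" by (rule nth_equalityI) (simp_all add: conc_def del: upt_Suc)
    have "f w = map (aut_bd f ?\<xi>) [0..<length w]" using aut_bd_map[OF f xi, of "length w"] mw by simp
    also have "\<dots> = map (aut_bd g ?\<xi>) [0..<length w]" using eq[OF xi] by simp
    also have "\<dots> = g w" using aut_bd_map[OF g xi, of "length w"] mw by simp
    finally show ?thesis .
  qed
qed

section \<open>Complete subtrees and leaves\<close>

abbreviation leaf_list :: "nat \<Rightarrow> nat list set \<Rightarrow> nat list list" where
  "leaf_list d T \<equiv> sorted_list_of_set (leaves d T)"

lemma complete_subtree_finite: "complete_subtree d T \<Longrightarrow> finite T" by (simp add: complete_subtree_def)
lemma complete_subtree_Nil: "complete_subtree d T \<Longrightarrow> [] \<in> T" by (simp add: complete_subtree_def)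
lemma complete_subtree_words: "complete_subtree d T \<Longrightarrow> u \<in> T \<Longrightarrow> u \<in> words d"
  by (auto simp add: complete_subtree_def)
lemma complete_subtree_parent: "complete_subtree d T \<Longrightarrow> u @ [x] \<in> T \<Longrightarrow> u \<in> T"
  unfolding complete_subtree_def by blast
lemma complete_subtree_sibling: "complete_subtree d T \<Longrightarrow> u @ [x] \<in> T \<Longrightarrow> y \<in> {1..d} \<Longrightarrow> u @ [y] \<in> T"
proof -
  assume T: "complete_subtree d T" and ux: "u @ [x] \<in> T" and y: "y \<in> {1..d}"
  have u: "u \<in> T" using complete_subtree_parent[OF T ux] .
  have "x \<in> {1..d}" using complete_subtree_words[OF T ux] by simp
  then have "\<not> (\<forall>x\<in>{1..d}. u @ [x] \<notin> T)" using ux by blast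
  then have "\<forall>x\<in>{1..d}. u @ [x] \<in> T" using T u unfolding complete_subtree_def by blast
  then show ?thesis using y by blast
qed

lemma complete_subtree_prefix: "complete_subtree d T \<Longrightarrow> u @ v \<in> T \<Longrightarrow> u \<in> T"
proof (induction v rule: rev_induct)
  case Nil then show ?case by simp
next
  case (snoc x v)
  then show ?case using complete_subtree_parent[OF snoc.prems(1), of "u @ v" x] by simp
qed

lemma leaves_subset: "leaves d T \<subseteq> T" by (auto simp: leaves_def)

lemma leaf_ext:
  assumes T: "complete_subtree d T" and l: "l \<in> leaves d T" and lv: "l @ v \<in> T"
  shows "v = []"
proof (rule ccontr)
  assume "v \<noteq> []"
  then obtain x v' where v: "v = x # v'" by (cases v) auto
  have "l @ [x] \<in> T" using complete_subtree_prefix[OF T, of "l @ [x]" v'] lv v by simp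
  moreover have "x \<in> {1..d}" using complete_subtree_words[OF T lv] v by simp
  ultimately show False using l by (auto simp: leaves_def)
qed

lemma leaves_finite: "complete_subtree d T \<Longrightarrow> finite (leaves d T)"
  using complete_subtree_finite finite_subset[OF leaves_subset] by blast

lemma set_leaf_list: "complete_subtree d T \<Longrightarrow> set (leaf_list d T) = leaves d T"
  using leaves_finite by simp

lemma length_leaf_list: "complete_subtree d T \<Longrightarrow> length (leaf_list d T) = nleaves d T"
  using leaves_finite by (simp add: nleaves_def)

lemma leaf_in_leaves:
  assumes T: "complete_subtree d T" and i: "i \<in> {1..nleaves d T}"
  shows "leaf d T i \<in> leaves d T"
proof -
  have "i - 1 < length (leaf_list d T)" using i length_leaf_list[OF T] by auto
  then show ?thesis unfolding leaf_def using set_leaf_list[OF T] nth_mem by blast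
qed

lemma leaf_inj:
  assumes T: "complete_subtree d T" and i: "i \<in> {1..nleaves d T}" and j: "j \<in> {1..nleaves d T}"
    and e: "leaf d T i = leaf d T j"
  shows "i = j"
proof -
  have "i - 1 < length (leaf_list d T)" "j - 1 < length (leaf_list d T)" using i j length_leaf_list[OF T] by auto
  then have "i - 1 = j - 1" using e unfolding leaf_def using nth_eq_iff_index_eq[OF distinct_sorted_list_of_set] by blast
  then show ?thesis using i j by auto
qed

lemma leaf_surj:
  assumes T: "complete_subtree d T" and l: "l \<in> leaves d T"
  shows "\<exists>i\<in>{1..nleaves d T}. leaf d T i = l"
proof -
  obtain j where j: "j < length (leaf_list d T)" "leaf_list d T ! j = l" using l set_leaf_list[OF T] by (metis in_set_conv_nth)
  then show ?thesis using length_leaf_list[OF T] unfolding leaf_def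
    by (intro bexI[of _ "Suc j"]) auto
qed

lemma is_prefix_map: "is_prefix v \<xi> \<longleftrightarrow> v = map \<xi> [0..<length v]"
proof
  assume "is_prefix v \<xi>" then show "v = map \<xi> [0..<length v]"
    unfolding is_prefix_def by (intro nth_equalityI) (simp_all del: upt_Suc)
next
  assume h: "v = map \<xi> [0..<length v]"
  show "is_prefix v \<xi>" unfolding is_prefix_def
  proof (intro allI impI)
    fix j assume j: "j < length v"
    have "v ! j = map \<xi> [0..<length v] ! j" using arg_cong[OF h, of "\<lambda>x. x ! j"] .
    also have "\<dots> = \<xi> j" using j by (simp del: upt_Suc)
    finally show "\<xi> j = v ! j" by simp
  qed
qed

lemma leaf_prefix_unique:
  assumes T: "complete_subtree d T" and l1: "l1 \<in> leaves d T" and l2: "l2 \<in> leaves d T"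
    and p1: "is_prefix l1 \<xi>" and p2: "is_prefix l2 \<xi>"
  shows "l1 = l2"
proof -
  have gen: "a = b" if a: "a \<in> leaves d T" and b: "b \<in> leaves d T" and pa: "is_prefix a \<xi>" and pb: "is_prefix b \<xi>"
    and le: "length a \<le> length b" for a b
  proof -
    have "a = map \<xi> [0..<length a]" "b = map \<xi> [0..<length b]" using pa pb is_prefix_map by blast+
    then have "b = a @ drop (length a) b"
      using le by (metis append_take_drop_id take_map take_upt add_0 le_add_diff_inverse)
    then have "drop (length a) b = []" using leaf_ext[OF T a] b leaves_subset by (metis subsetD)
    then show ?thesis using \<open>b = a @ drop (length a) b\<close> by simp
  qed
  show ?thesis
  proof (cases "length l1 \<le> length l2")
    case True then show ?thesis using gen[OF l1 l2 p1 p2] by simp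
  next
    case False then show ?thesis using gen[OF l2 l1 p2 p1] by simp
  qed
qed

lemma leaf_prefix_exists:
  assumes T: "complete_subtree d T" and xi: "\<xi> \<in> boundary d"
  shows "\<exists>l\<in>leaves d T. is_prefix l \<xi>"
proof (rule ccontr)
  assume no: "\<not> ?thesis"
  have all: "map \<xi> [0..<m] \<in> T" for m
  proof (induction m)
    case 0 then show ?case using complete_subtree_Nil[OF T] by simp
  next
    case (Suc m)
    have "map \<xi> [0..<m] \<notin> leaves d T" using no is_prefix_map by fastforce
    then obtain x where x: "x \<in> {1..d}" "map \<xi> [0..<m] @ [x] \<in> T" using Suc by (auto simp: leaves_def)
    have "\<xi> m \<in> {1..d}" using xi by (simp add: boundary_def)
    then have "map \<xi> [0..<m] @ [\<xi> m] \<in> T" using complete_subtree_sibling[OF T x(2)] by blast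
    then show ?case by simp
  qed
  obtain B where B: "\<forall>u\<in>T. length u < B"
    using complete_subtree_finite[OF T] by (metis finite_nat_set_iff_bounded imageI finite_imageI)
  then show False using all[of B] by fastforce
qed

lemma leaf_prefix_ex1:
  assumes T: "complete_subtree d T" and xi: "\<xi> \<in> boundary d"
  shows "\<exists>!i. i \<in> {1..nleaves d T} \<and> is_prefix (leaf d T i) \<xi>"
proof -
  obtain l where l: "l \<in> leaves d T" "is_prefix l \<xi>" using leaf_prefix_exists[OF T xi] by blast
  obtain i where i: "i \<in> {1..nleaves d T}" "leaf d T i = l" using leaf_surj[OF T l(1)] by blast
  show ?thesis
  proof (rule ex1I[of _ i])
    show "i \<in> {1..nleaves d T} \<and> is_prefix (leaf d T i) \<xi>" using i l by simp
    fix j assume j: "j \<in> {1..nleaves d T} \<and> is_prefix (leaf d T j) \<xi>"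
    then have "leaf d T j = l" using leaf_prefix_unique[OF T leaf_in_leaves[OF T] l(1)] l(2) by blast
    then show "j = i" using leaf_inj[OF T] i j by metis
  qed
qed

lemma leaf_index_conc:
  assumes T: "complete_subtree d T" and i: "i \<in> {1..nleaves d T}" and w: "w \<in> boundary d"
  shows "(THE j. j \<in> {1..nleaves d T} \<and> is_prefix (leaf d T j) (conc (leaf d T i) w)) = i"
proof -
  have l: "leaf d T i \<in> words d" using complete_subtree_words[OF T] leaf_in_leaves[OF T i] leaves_subset by blast
  have xi: "conc (leaf d T i) w \<in> boundary d" using conc_boundary[OF l w] .
  show ?thesis
    using the1_equality[OF leaf_prefix_ex1[OF T xi]] i is_prefix_conc by blast
qed

section \<open>Adding a caret\<close>

lemma less_list_split:
  fixes y l :: "nat list"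
  assumes "y < l" and "\<not> (\<exists>v. l = y @ v)"
  shows "\<exists>u a b v w. a < b \<and> y = u @ a # v \<and> l = u @ b # w"
  using assms unfolding list_less_def lexord_def by auto

lemma less_list_snoc_right:
  fixes y l :: "nat list"
  assumes "y < l" and "\<not> (\<exists>v. l = y @ v)"
  shows "y < l @ [x]"
proof -
  obtain u a b v w where "a < b" "y = u @ a # v" "l = u @ b # w" using less_list_split[OF assms] by blast
  then show ?thesis unfolding list_less_def lexord_def by auto
qed

lemma less_list_snoc_left:
  fixes z l :: "nat list"
  assumes "l < z" and "\<not> (\<exists>v. z = l @ v)"
  shows "l @ [x] < z"
proof -
  obtain u a b v w where "a < b" "l = u @ a # v" "z = u @ b # w" using less_list_split[OF assms] by blast
  then show ?thesis unfolding list_less_def lexord_def by auto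
qed

lemma snoc_less_snoc:
  fixes l :: "nat list"
  assumes "x < y"
  shows "l @ [x] < l @ [y]"
  using assms unfolding list_less_def lexord_def by fastforce

lemma complete_subtree_add_caret:
  assumes T: "complete_subtree d T" and l: "l \<in> leaves d T"
  shows "complete_subtree d (add_caret d T l)"
proof -
  have lT: "l \<in> T" using l leaves_subset by blast
  have lw: "l \<in> words d" using complete_subtree_words[OF T lT] .
  let ?T' = "add_caret d T l"
  have fin: "finite ?T'" using complete_subtree_finite[OF T] by (simp add: add_caret_def)
  have nil: "[] \<in> ?T'" using complete_subtree_Nil[OF T] by (simp add: add_caret_def)
  have sub: "?T' \<subseteq> words d" using T lw by (auto simp: add_caret_def complete_subtree_def)
  have par: "\<forall>u x. u @ [x] \<in> ?T' \<longrightarrow> u \<in> ?T'"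
    using complete_subtree_parent[OF T] lT by (auto simp: add_caret_def)
  have ch: "\<forall>u\<in>?T'. (\<forall>x\<in>{1..d}. u @ [x] \<notin> ?T') \<or> (\<forall>x\<in>{1..d}. u @ [x] \<in> ?T')"
  proof
    fix u assume u: "u \<in> ?T'"
    show "(\<forall>x\<in>{1..d}. u @ [x] \<notin> ?T') \<or> (\<forall>x\<in>{1..d}. u @ [x] \<in> ?T')"
    proof (cases "u = l")
      case True then show ?thesis by (auto simp: add_caret_def)
    next
      case False
      then have "u @ [x] \<in> ?T' \<longleftrightarrow> u @ [x] \<in> T" for x by (auto simp: add_caret_def)
      moreover have "u \<in> T \<Longrightarrow> ?thesis" using T calculation unfolding complete_subtree_def by auto
      moreover have "u \<notin> T \<Longrightarrow> \<forall>x. u @ [x] \<notin> T" using complete_subtree_parent[OF T] by blast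
      ultimately show ?thesis by auto
    qed
  qed
  show ?thesis unfolding complete_subtree_def using fin nil sub par ch by blast
qed

lemma leaves_add_caret:
  assumes T: "complete_subtree d T" and l: "l \<in> leaves d T" and d: "d \<ge> 1"
  shows "leaves d (add_caret d T l) = (leaves d T - {l}) \<union> {l @ [x] |x. x \<in> {1..d}}"
proof -
  have lT: "l \<in> T" using l leaves_subset by blast
  have nl: "l @ [x] \<notin> T" for x
  proof
    assume "l @ [x] \<in> T" then have "[x] = []" using leaf_ext[OF T l] by blast
    then show False by simp
  qed
  have nl2: "l @ [x, y] \<notin> T" for x y
    using nl complete_subtree_parent[OF T, of "l @ [x]" y] by auto
  show ?thesis
  proof (rule equalityI; rule subsetI)
    fix u assume u: "u \<in> leaves d (add_caret d T l)"
    then have uT: "u \<in> add_caret d T l" and nc: "\<forall>x\<in>{1..d}. u @ [x] \<notin> add_caret d T l"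
      by (auto simp: leaves_def)
    show "u \<in> (leaves d T - {l}) \<union> {l @ [x] |x. x \<in> {1..d}}"
    proof (cases "u \<in> T")
      case True
      have "u \<noteq> l" using nc d by (auto simp: add_caret_def)
      then show ?thesis using True nc by (auto simp: leaves_def add_caret_def)
    next
      case False then show ?thesis using uT by (auto simp: add_caret_def)
    qed
  next
    fix u assume "u \<in> (leaves d T - {l}) \<union> {l @ [x] |x. x \<in> {1..d}}"
    then consider "u \<in> leaves d T" "u \<noteq> l" | x where "x \<in> {1..d}" "u = l @ [x]" by blast
    then show "u \<in> leaves d (add_caret d T l)"
    proof cases
      case 1 then show ?thesis by (auto simp: leaves_def add_caret_def)
    next
      case 2 then show ?thesis using nl2 by (auto simp: leaves_def add_caret_def)
    qed
  qed
qed

lemma leaf_list_add_caret: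
  assumes T: "complete_subtree d T" and p: "p \<in> {1..nleaves d T}" and d: "d \<ge> 1"
  defines "l \<equiv> leaf d T p"
  shows "leaf_list d (add_caret d T l) = take (p - 1) (leaf_list d T) @ map (\<lambda>x. l @ [x]) [1..<d+1] @ drop p (leaf_list d T)"
proof -
  let ?L = "leaf_list d T"
  have l: "l \<in> leaves d T" using leaf_in_leaves[OF T p] by (simp add: l_def)
  have lenL: "length ?L = nleaves d T" using length_leaf_list[OF T] .
  have lp: "?L ! (p - 1) = l" by (simp add: l_def leaf_def)
  have p1: "p - 1 < length ?L" using p lenL by auto
  have sL: "sorted_wrt (<) ?L" by (rule strict_sorted_list_of_set)
  have noprefix: "\<not> (\<exists>v. b = a @ v)" if "a \<in> leaves d T" "b \<in> leaves d T" "a \<noteq> b" for a b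
    using leaf_ext[OF T] that leaves_subset by fastforce
  let ?M = "take (p - 1) ?L @ map (\<lambda>x. l @ [x]) [1..<d+1] @ drop p ?L"
  have setM: "set ?M = (leaves d T - {l}) \<union> {l @ [x] |x. x \<in> {1..d}}"
  proof -
    have "?L = take (p - 1) ?L @ ?L ! (p - 1) # drop (Suc (p - 1)) ?L" by (rule id_take_nth_drop[OF p1])
    moreover have "Suc (p - 1) = p" using p by auto
    ultimately have dec: "?L = take (p - 1) ?L @ l # drop p ?L" using lp by simp
    have "set ?L = set (take (p - 1) ?L) \<union> {l} \<union> set (drop p ?L)"
      using arg_cong[OF dec, of set] by simp
    moreover have "l \<notin> set (take (p - 1) ?L) \<union> set (drop p ?L)"
      using arg_cong[OF dec, of distinct] by simp
    ultimately have "set (take (p - 1) ?L) \<union> set (drop p ?L) = leaves d T - {l}"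
      using set_leaf_list[OF T] by blast
    moreover have "set (map (\<lambda>x. l @ [x]) [1..<d+1]) = {l @ [x] |x. x \<in> {1..d}}" by auto
    ultimately show ?thesis by auto
  qed
  have sM: "sorted_wrt (<) ?M"
  proof -
    have s1: "sorted_wrt (<) (take (p - 1) ?L)" using sL sorted_wrt_take by blast
    have s3: "sorted_wrt (<) (drop p ?L)" using sL sorted_wrt_drop by blast
    have s2: "sorted_wrt (<) (map (\<lambda>x. l @ [x]) [1..<d+1])"
      unfolding sorted_wrt_map by (rule sorted_wrt_mono_rel[OF _ sorted_wrt_upt]) (rule snoc_less_snoc)
    have lt1: "y < l" if yin: "y \<in> set (take (p - 1) ?L)" for y
    proof -
      obtain j where j: "j < p - 1" "y = ?L ! j" using yin p1 by (auto simp: in_set_conv_nth)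
      then show ?thesis using sorted_wrt_nth_less[OF sL j(1) p1] lp by simp
    qed
    have lt3: "l < z" if zin: "z \<in> set (drop p ?L)" for z
    proof -
      obtain j where j: "j < length ?L - p" "z = ?L ! (p + j)" using zin by (auto simp: in_set_conv_nth)
      have a: "p - 1 < p + j" and b: "p + j < length ?L" using j p by auto
      show ?thesis using sorted_wrt_nth_less[OF sL a b] lp j(2) by simp
    qed
    have inL1: "y \<in> leaves d T" if "y \<in> set (take (p - 1) ?L)" for y
      using set_take_subset[of "p - 1" ?L] that set_leaf_list[OF T] by blast
    have inL3: "z \<in> leaves d T" if "z \<in> set (drop p ?L)" for z
      using set_drop_subset[of p ?L] that set_leaf_list[OF T] by blast
    have c12: "y < l @ [x]" if "y \<in> set (take (p - 1) ?L)" for y x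
      using less_list_snoc_right[OF lt1[OF that] noprefix[OF inL1[OF that] l]] lt1[OF that] by blast
    have c23: "l @ [x] < z" if "z \<in> set (drop p ?L)" for z x
      using less_list_snoc_left[OF lt3[OF that] noprefix[OF l inL3[OF that]]] lt3[OF that] by blast
    have c13: "y < z" if "y \<in> set (take (p - 1) ?L)" "z \<in> set (drop p ?L)" for y z
      using lt1[OF that(1)] lt3[OF that(2)] by simp
    show ?thesis using s1 s2 s3 c12 c23 c13 by (auto simp: sorted_wrt_append)
  qed
  have "set (leaf_list d (add_caret d T l)) = set ?M"
    using leaves_add_caret[OF T l d] setM set_leaf_list[OF complete_subtree_add_caret[OF T l]] by simp
  then show ?thesis
    using strict_sorted_equal[OF sM strict_sorted_list_of_set[of "leaves d (add_caret d T l)"]] by simp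
qed

text \<open>The index shift caused by inserting a block of d positions at position k; it governs
  both the leaf numbering after adding a caret and the cloned permutation.\<close>
definition skip_block :: "nat \<Rightarrow> nat \<Rightarrow> nat \<Rightarrow> nat" where
  "skip_block d k m = (if m < k then m else m + d - 1)"

lemma skip_block_in:
  assumes "m \<in> {1..n}" "m \<noteq> k" "k \<in> {1..n}"
  shows "skip_block d k m \<in> {1..n + d - 1}"
  using assms by (auto simp: skip_block_def)

lemma skip_block_cases:
  assumes "i \<in> {1..n + d - 1}" "k \<in> {1..n}"
  obtains m where "m \<in> {1..n}" "m \<noteq> k" "i = skip_block d k m"
    | x where "x \<in> {1..d}" "i = k + x - 1"
proof -
  consider "i < k" | "k \<le> i" "i \<le> k + d - 1" | "k + d - 1 < i" by linarith
  then show thesis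
  proof cases
    case 1
    then have "i \<in> {1..n}" "i \<noteq> k" "i = skip_block d k i" using assms by (auto simp: skip_block_def)
    then show ?thesis by (rule that(1))
  next
    case 2
    then have "i - k + 1 \<in> {1..d}" "i = k + (i - k + 1) - 1" using assms(2) by auto
    then show ?thesis by (rule that(2))
  next
    case 3
    then have "i - d + 1 \<in> {1..n}" "i - d + 1 \<noteq> k" "i = skip_block d k (i - d + 1)"
      using assms by (auto simp: skip_block_def)
    then show ?thesis by (rule that(1))
  qed
qed

lemma leaf_add_caret:
  assumes T: "complete_subtree d T" and p: "p \<in> {1..nleaves d T}" and d: "d \<ge> 1"
  defines "T' \<equiv> add_caret d T (leaf d T p)"
  shows "nleaves d T' = nleaves d T + d - 1"
    and "m \<in> {1..nleaves d T} \<Longrightarrow> m \<noteq> p \<Longrightarrow> leaf d T' (skip_block d p m) = leaf d T m"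
    and "x \<in> {1..d} \<Longrightarrow> leaf d T' (p + x - 1) = leaf d T p @ [x]"
proof -
  let ?L = "leaf_list d T" and ?l = "leaf d T p"
  have l: "?l \<in> leaves d T" using leaf_in_leaves[OF T p] .
  have T': "complete_subtree d T'" unfolding T'_def using complete_subtree_add_caret[OF T l] .
  have M: "leaf_list d T' = take (p - 1) ?L @ map (\<lambda>x. ?l @ [x]) [1..<d+1] @ drop p ?L"
    unfolding T'_def using leaf_list_add_caret[OF T p d] by simp
  have lenL: "length ?L = nleaves d T" using length_leaf_list[OF T] .
  have pn: "1 \<le> p" "p \<le> nleaves d T" using p by auto
  have lt: "length (take (p - 1) ?L) = p - 1" using pn lenL by simp
  show "nleaves d T' = nleaves d T + d - 1"
    using length_leaf_list[OF T'] M lenL pn d by simp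
  show "leaf d T' (skip_block d p m) = leaf d T m" if m: "m \<in> {1..nleaves d T}" "m \<noteq> p"
  proof (cases "m < p")
    case True
    then have lt': "m - 1 < p - 1" using m by auto
    then have "leaf_list d T' ! (m - 1) = take (p - 1) ?L ! (m - 1)" using M lt by (simp add: nth_append)
    also have "\<dots> = ?L ! (m - 1)" using lt' by simp
    finally show ?thesis using True by (simp add: leaf_def skip_block_def)
  next
    case False
    have a: "\<not> m + d - 2 < p - 1" "m + d - 2 - (p - 1) = m + d - 1 - p" using False pn d by auto
    have b: "\<not> m + d - 1 - p < d" "p + (m + d - 1 - p - d) = m - 1" using False m d by auto
    have "leaf_list d T' ! (m + d - 2) = (map (\<lambda>x. ?l @ [x]) [1..<d+1] @ drop p ?L) ! (m + d - 1 - p)"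
      using M lt a by (simp add: nth_append del: upt_Suc)
    also have "\<dots> = ?L ! (m - 1)" using b m lenL pn by (simp add: nth_append del: upt_Suc)
    finally show ?thesis using False d by (simp add: leaf_def skip_block_def numeral_2_eq_2)
  qed
  show "leaf d T' (p + x - 1) = ?l @ [x]" if x: "x \<in> {1..d}"
  proof -
    have a: "\<not> p + x - 2 < p - 1" "p + x - 2 - (p - 1) = x - 1" using x pn by auto
    have "leaf_list d T' ! (p + x - 2) = (map (\<lambda>x. ?l @ [x]) [1..<d+1] @ drop p ?L) ! (x - 1)"
      using M lt a by (simp add: nth_append del: upt_Suc)
    also have "\<dots> = ?l @ [x]"
    proof -
      have "x - 1 < d" using x by auto
      then show ?thesis using x by (simp add: nth_append del: upt_Suc)
    qed
    finally show ?thesis using x pn by (simp add: leaf_def numeral_2_eq_2)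
  qed
qed

section \<open>The boundary action of a triple\<close>

lemma aa_conc_leaf:
  assumes Tp: "complete_subtree d Tp" and i: "i \<in> {1..nleaves d Tp}" and w: "w \<in> boundary d"
  shows "aa d (Tm, (\<sigma>, fs), Tp) (conc (leaf d Tp i) w) = conc (leaf d Tm (\<sigma> i)) (aut_bd (fs i) w)"
proof -
  have l: "leaf d Tp i \<in> words d" using complete_subtree_words[OF Tp] leaf_in_leaves[OF Tp i] leaves_subset by blast
  have xi: "conc (leaf d Tp i) w \<in> boundary d" using conc_boundary[OF l w] .
  show ?thesis unfolding aa_def using xi leaf_index_conc[OF Tp i w] sdrop_conc[of "leaf d Tp i" w]
    by (simp add: Let_def)
qed

lemma aa_out: "\<xi> \<notin> boundary d \<Longrightarrow> aa d t \<xi> = \<xi>"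
  by (simp add: aa_def split: prod.splits)

lemma boundary_conc_leaf:
  assumes T: "complete_subtree d T" and xi: "\<xi> \<in> boundary d"
  shows "\<exists>i\<in>{1..nleaves d T}. \<exists>w\<in>boundary d. \<xi> = conc (leaf d T i) w"
proof -
  obtain l where l: "l \<in> leaves d T" "is_prefix l \<xi>" using leaf_prefix_exists[OF T xi] by blast
  obtain i where i: "i \<in> {1..nleaves d T}" "leaf d T i = l" using leaf_surj[OF T l(1)] by blast
  show ?thesis using i l conc_sdrop[OF l(2)] sdrop_boundary[OF xi] by metis
qed

lemma aa_eqI:
  assumes T: "complete_subtree d T"
    and eq: "\<And>i w. i \<in> {1..nleaves d T} \<Longrightarrow> w \<in> boundary d \<Longrightarrow> aa d t (conc (leaf d T i) w) = aa d t' (conc (leaf d T i) w)"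
  shows "aa d t = aa d t'"
proof
  fix \<xi>
  show "aa d t \<xi> = aa d t' \<xi>"
  proof (cases "\<xi> \<in> boundary d")
    case True
    then obtain i w where "i \<in> {1..nleaves d T}" "w \<in> boundary d" "\<xi> = conc (leaf d T i) w"
      using boundary_conc_leaf[OF T] by blast
    then show ?thesis using eq by simp
  next
    case False then show ?thesis by (simp add: aa_out)
  qed
qed

lemma triple_okD:
  assumes "triple_ok d (Tm, (\<sigma>, fs), Tp)"
  shows "complete_subtree d Tm" "complete_subtree d Tp" "nleaves d Tm = nleaves d Tp"
    "\<sigma> permutes {1..nleaves d Tp}" "\<And>i. i \<in> {1..nleaves d Tp} \<Longrightarrow> tree_aut d (fs i)"
    "\<And>i. i \<notin> {1..nleaves d Tp} \<Longrightarrow> fs i = id"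
  using assms by (simp_all add: triple_ok_def)

section \<open>The cloned permutation\<close>

lemma clone_local_perm_apply:
  assumes \<sigma>: "\<sigma> permutes {1..n}" and \<rho>: "\<rho> permutes {1..d}" and k: "k \<in> {1..n}"
  defines "\<sigma>' \<equiv> clone_perm d n k \<sigma> \<circ> local_perm d k \<rho>"
  shows "m \<in> {1..n} \<Longrightarrow> m \<noteq> k \<Longrightarrow> \<sigma>' (skip_block d k m) = skip_block d (\<sigma> k) (\<sigma> m)"
    and "x \<in> {1..d} \<Longrightarrow> \<sigma>' (k + x - 1) = \<sigma> k + \<rho> x - 1"
    and "j \<notin> {1..n + d - 1} \<Longrightarrow> \<sigma>' j = j"
proof -
  show "\<sigma>' (skip_block d k m) = skip_block d (\<sigma> k) (\<sigma> m)" if m: "m \<in> {1..n}" "m \<noteq> k"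
  proof (cases "m < k")
    case True
    have "local_perm d k \<rho> m = m" using True by (simp add: local_perm_def)
    then show ?thesis using True m unfolding \<sigma>'_def by (simp add: clone_perm_def skip_block_def)
  next
    case False
    then have j: "\<not> (1 \<le> m + d - 1 \<and> m + d - 1 < k)" "\<not> (k \<le> m + d - 1 \<and> m + d - 1 \<le> k + d - 1)"
      "k + d - 1 < m + d - 1 \<and> m + d - 1 \<le> n + d - 1" "m + d - 1 - d + 1 = m"
      using m k by auto
    have "local_perm d k \<rho> (m + d - 1) = m + d - 1"
      unfolding local_perm_def using j(2) by (rule if_not_P)
    then show ?thesis using False unfolding \<sigma>'_def comp_def skip_block_def clone_perm_def
      using j by (simp only: if_False if_True simp_thms)
  qed
  show "\<sigma>' (k + x - 1) = \<sigma> k + \<rho> x - 1" if x: "x \<in> {1..d}"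
  proof -
    have rx: "\<rho> x \<in> {1..d}" using permutes_in_image[OF \<rho>] x by simp
    have "local_perm d k \<rho> (k + x - 1) = k + \<rho> (k + x - 1 - k + 1) - 1"
      unfolding local_perm_def using x k by (intro if_P) auto
    also have "\<dots> = k + \<rho> x - 1" using x by auto
    finally have l: "local_perm d k \<rho> (k + x - 1) = k + \<rho> x - 1" .
    have c: "\<not> (1 \<le> k + \<rho> x - 1 \<and> k + \<rho> x - 1 < k)" "k \<le> k + \<rho> x - 1 \<and> k + \<rho> x - 1 \<le> k + d - 1"
      "\<sigma> k + (k + \<rho> x - 1) - k = \<sigma> k + \<rho> x - 1"
      using rx k by auto
    show ?thesis unfolding \<sigma>'_def comp_def l unfolding clone_perm_def using c
      by (simp only: if_False if_True simp_thms)
  qed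
  show "\<sigma>' j = j" if j: "j \<notin> {1..n + d - 1}"
  proof -
    have c: "\<not> (k \<le> j \<and> j \<le> k + d - 1)" "\<not> (1 \<le> j \<and> j < k)" "\<not> (k + d - 1 < j \<and> j \<le> n + d - 1)"
      using j k by auto
    have l: "local_perm d k \<rho> j = j" unfolding local_perm_def using c(1) by (rule if_not_P)
    show ?thesis unfolding \<sigma>'_def comp_def l unfolding clone_perm_def using c
      by (simp only: if_False if_True simp_thms)
  qed
qed

lemma clone_local_perm_permutes:
  assumes \<sigma>: "\<sigma> permutes {1..n}" and \<rho>: "\<rho> permutes {1..d}" and k: "k \<in> {1..n}"
  shows "(clone_perm d n k \<sigma> \<circ> local_perm d k \<rho>) permutes {1..n + d - 1}"
proof -
  let ?s = "clone_perm d n k \<sigma> \<circ> local_perm d k \<rho>" and ?A = "{1..n + d - 1}"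
  note V = clone_local_perm_apply[OF \<sigma> \<rho> k]
  have sk: "\<sigma> k \<in> {1..n}" using permutes_in_image[OF \<sigma>] k by simp
  have into: "?s ` ?A \<subseteq> ?A"
  proof
    fix y assume "y \<in> ?s ` ?A"
    then obtain i where i: "i \<in> ?A" "y = ?s i" by blast
    from i(1) k show "y \<in> ?A"
    proof (cases rule: skip_block_cases)
      case (1 m)
      have "\<sigma> m \<in> {1..n}" "\<sigma> m \<noteq> \<sigma> k"
        using 1 permutes_in_image[OF \<sigma>] inj_eq[OF permutes_inj[OF \<sigma>]] by simp_all
      then show ?thesis using i 1 V(1) skip_block_in[OF _ _ sk] by simp
    next
      case (2 x)
      have "\<rho> x \<in> {1..d}" using permutes_in_image[OF \<rho>] 2(1) by simp
      then show ?thesis using i 2 V(2)[OF 2(1)] sk by auto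
    qed
  qed
  have onto: "?A \<subseteq> ?s ` ?A"
  proof
    fix y assume "y \<in> ?A"
    from this sk show "y \<in> ?s ` ?A"
    proof (cases rule: skip_block_cases)
      case (1 m')
      have "m' \<in> \<sigma> ` {1..n}" using 1 permutes_image[OF \<sigma>] by simp
      then obtain m where m: "m \<in> {1..n}" "\<sigma> m = m'" by blast
      then have mk: "m \<noteq> k" using 1 by blast
      have "y = ?s (skip_block d k m)" using m 1 V(1)[OF m(1) mk] by simp
      then show ?thesis using skip_block_in[OF m(1) mk k] by blast
    next
      case (2 z)
      have "z \<in> \<rho> ` {1..d}" using 2 permutes_image[OF \<rho>] by simp
      then obtain x where x: "x \<in> {1..d}" "\<rho> x = z" by blast
      have "y = ?s (k + x - 1)" using x 2 V(2)[OF x(1)] by simp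
      moreover have "k + x - 1 \<in> ?A" using x k by auto
      ultimately show ?thesis by blast
    qed
  qed
  have "inj_on ?s ?A" using finite_surj_inj[OF _ onto] by simp
  then have "bij_betw ?s ?A ?A" using into onto by (simp add: bij_betw_def)
  then show ?thesis using bij_imp_permutes V(3) by blast
qed

section \<open>Expansion preserves the action\<close>

lemma kappa_apply:
  assumes k: "k \<in> {1..n}" and d: "d \<ge> 1"
  shows "fst (kappa d n k (\<sigma>, fs)) = clone_perm d n k \<sigma> \<circ> local_perm d k (aut_rho d (fs k))"
    and "m \<in> {1..n} \<Longrightarrow> m \<noteq> k \<Longrightarrow> snd (kappa d n k (\<sigma>, fs)) (skip_block d k m) = fs m"
    and "x \<in> {1..d} \<Longrightarrow> snd (kappa d n k (\<sigma>, fs)) (k + x - 1) = aut_state (fs k) x"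
    and "i \<notin> {1..n + d - 1} \<Longrightarrow> snd (kappa d n k (\<sigma>, fs)) i = id"
proof -
  show "fst (kappa d n k (\<sigma>, fs)) = clone_perm d n k \<sigma> \<circ> local_perm d k (aut_rho d (fs k))"
    by (simp add: kappa_def)
  show "snd (kappa d n k (\<sigma>, fs)) (skip_block d k m) = fs m" if m: "m \<in> {1..n}" "m \<noteq> k"
  proof (cases "m < k")
    case True
    then have "1 \<le> m \<and> m < k" "skip_block d k m = m" using m by (auto simp: skip_block_def)
    then show ?thesis unfolding kappa_def prod.case snd_conv by (simp only: if_True simp_thms)
  next
    case False
    then have c: "\<not> (1 \<le> m + d - 1 \<and> m + d - 1 < k)" "\<not> (k \<le> m + d - 1 \<and> m + d - 1 \<le> k + d - 1)"
      "k + d - 1 < m + d - 1 \<and> m + d - 1 \<le> n + d - 1" "m + d - 1 - d + 1 = m"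
      "skip_block d k m = m + d - 1"
      using m k d by (auto simp: skip_block_def)
    then show ?thesis unfolding kappa_def prod.case snd_conv by (simp only: if_True if_False simp_thms)
  qed
  show "snd (kappa d n k (\<sigma>, fs)) (k + x - 1) = aut_state (fs k) x" if x: "x \<in> {1..d}"
  proof -
    have "\<not> (1 \<le> k + x - 1 \<and> k + x - 1 < k)" "k \<le> k + x - 1 \<and> k + x - 1 \<le> k + d - 1"
      "k + x - 1 - k + 1 = x"
      using x k by auto
    then show ?thesis unfolding kappa_def prod.case snd_conv by (simp only: if_True if_False simp_thms)
  qed
  show "snd (kappa d n k (\<sigma>, fs)) i = id" if "i \<notin> {1..n + d - 1}"
  proof -
    have "\<not> (1 \<le> i \<and> i < k)" "\<not> (k \<le> i \<and> i \<le> k + d - 1)" "\<not> (k + d - 1 < i \<and> i \<le> n + d - 1)"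
      using that k d by auto
    then show ?thesis unfolding kappa_def prod.case snd_conv by (simp only: if_False)
  qed
qed

lemma expand_triple_ok:
  assumes ok: "triple_ok d (Tm, (\<sigma>, fs), Tp)" and d: "d \<ge> 1" and k: "k \<in> {1..nleaves d Tp}"
  shows "triple_ok d (add_caret d Tm (leaf d Tm (\<sigma> k)), kappa d (nleaves d Tp) k (\<sigma>, fs),
    add_caret d Tp (leaf d Tp k))"
proof -
  note O = triple_okD[OF ok]
  define n where "n = nleaves d Tp"
  have kn: "k \<in> {1..n}" using k by (simp add: n_def)
  have \<sigma>: "\<sigma> permutes {1..n}" using O(4) by (simp add: n_def)
  have pn: "\<sigma> k \<in> {1..nleaves d Tm}" using permutes_in_image[OF \<sigma>] kn O(3) by (simp add: n_def)
  have fk: "tree_aut d (fs k)" using O(5) k by blast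
  obtain \<sigma>' fs' where kap: "kappa d n k (\<sigma>, fs) = (\<sigma>', fs')" by (metis surj_pair)
  have "\<sigma>' permutes {1..n + d - 1}"
    using kappa_apply(1)[OF kn d, of \<sigma> fs] kap clone_local_perm_permutes[OF \<sigma> aut_rho_permutes[OF fk] kn]
    by simp
  moreover have "tree_aut d (fs' i)" if i: "i \<in> {1..n + d - 1}" for i
    using i kn
  proof (cases rule: skip_block_cases)
    case (1 m) then show ?thesis using kappa_apply(2)[OF kn d, of m \<sigma> fs] kap O(5) by (simp add: n_def)
  next
    case (2 x) then show ?thesis using kappa_apply(3)[OF kn d, of x \<sigma> fs] kap tree_aut_state[OF fk] by simp
  qed
  moreover have "fs' i = id" if "i \<notin> {1..n + d - 1}" for i
    using kappa_apply(4)[OF kn d that, of \<sigma> fs] kap by simp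
  ultimately show ?thesis
    using complete_subtree_add_caret[OF O(1) leaf_in_leaves[OF O(1) pn]]
      complete_subtree_add_caret[OF O(2) leaf_in_leaves[OF O(2) k]]
      leaf_add_caret(1)[OF O(1) pn d] leaf_add_caret(1)[OF O(2) k d] O(3) kap
    by (simp add: triple_ok_def n_def)
qed

text \<open>Boundary points below an old leaf are moved as before (up to renumbering), and below
  the leaf k the wreath recursion of the state at k splits the action along the new caret.\<close>
lemma aa_expand:
  assumes ok: "triple_ok d (Tm, (\<sigma>, fs), Tp)" and d: "d \<ge> 1" and k: "k \<in> {1..nleaves d Tp}"
  shows "aa d (add_caret d Tm (leaf d Tm (\<sigma> k)), kappa d (nleaves d Tp) k (\<sigma>, fs),
    add_caret d Tp (leaf d Tp k)) = aa d (Tm, (\<sigma>, fs), Tp)"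
proof -
  note O = triple_okD[OF ok]
  define n p \<rho> where "n = nleaves d Tp" and "p = \<sigma> k" and "\<rho> = aut_rho d (fs k)"
  define Tm' Tp' where "Tm' = add_caret d Tm (leaf d Tm p)" and "Tp' = add_caret d Tp (leaf d Tp k)"
  obtain \<sigma>' fs' where kap: "kappa d n k (\<sigma>, fs) = (\<sigma>', fs')" by (metis surj_pair)
  have kn: "k \<in> {1..n}" using k by (simp add: n_def)
  have \<sigma>: "\<sigma> permutes {1..n}" using O(4) by (simp add: n_def)
  have nm: "nleaves d Tm = n" using O(3) by (simp add: n_def)
  have pn: "p \<in> {1..nleaves d Tm}" using permutes_in_image[OF \<sigma>] kn nm by (simp add: p_def)
  have fk: "tree_aut d (fs k)" using O(5) k by blast
  have \<rho>: "\<rho> permutes {1..d}" using aut_rho_permutes[OF fk] by (simp add: \<rho>_def)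
  have \<sigma>'_def: "\<sigma>' = clone_perm d n k \<sigma> \<circ> local_perm d k \<rho>"
    using kappa_apply(1)[OF kn d, of \<sigma> fs] kap by (simp add: \<rho>_def)
  note V = clone_local_perm_apply[OF \<sigma> \<rho> kn, folded \<sigma>'_def]
  have Tp': "complete_subtree d Tp'"
    unfolding Tp'_def using complete_subtree_add_caret[OF O(2) leaf_in_leaves[OF O(2) k]] .
  have "aa d (Tm', (\<sigma>', fs'), Tp') = aa d (Tm, (\<sigma>, fs), Tp)"
  proof (rule aa_eqI[OF Tp'])
    fix i w assume i: "i \<in> {1..nleaves d Tp'}" and w: "w \<in> boundary d"
    have "i \<in> {1..n + d - 1}" using i leaf_add_caret(1)[OF O(2) k d] by (simp add: Tp'_def n_def)
    then show "aa d (Tm', (\<sigma>', fs'), Tp') (conc (leaf d Tp' i) w) = aa d (Tm, (\<sigma>, fs), Tp) (conc (leaf d Tp' i) w)"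
      using kn
    proof (cases rule: skip_block_cases)
      case (1 m)
      have m: "m \<in> {1..nleaves d Tp}" using 1 by (simp add: n_def)
      have sm: "\<sigma> m \<in> {1..nleaves d Tm}" "\<sigma> m \<noteq> p"
        using 1 permutes_in_image[OF \<sigma>] injD[OF permutes_inj[OF \<sigma>]] nm by (auto simp: p_def)
      show ?thesis
        using aa_conc_leaf[OF Tp' i w] aa_conc_leaf[OF O(2) m w] 1 V(1)
          leaf_add_caret(2)[OF O(2) k d m] leaf_add_caret(2)[OF O(1) pn d sm]
          kappa_apply(2)[OF kn d, of m \<sigma> fs] kap
        by (simp add: Tp'_def Tm'_def p_def)
    next
      case (2 x)
      have rx: "\<rho> x \<in> {1..d}" using permutes_in_image[OF \<rho>] 2 by simp
      have "aa d (Tm, (\<sigma>, fs), Tp) (conc (leaf d Tp' i) w)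
          = aa d (Tm, (\<sigma>, fs), Tp) (conc (leaf d Tp k) (conc [x] w))"
        using 2 leaf_add_caret(3)[OF O(2) k d] by (simp add: Tp'_def conc_append)
      also have "\<dots> = conc (leaf d Tm p) (aut_bd (fs k) (conc [x] w))"
        using aa_conc_leaf[OF O(2) k conc_boundary[OF _ w]] 2 by (simp add: p_def)
      also have "\<dots> = conc (leaf d Tm p @ [\<rho> x]) (aut_bd (aut_state (fs k) x) w)"
        using aut_bd_Cons[OF fk _ w] 2 by (simp add: conc_append \<rho>_def)
      also have "\<dots> = aa d (Tm', (\<sigma>', fs'), Tp') (conc (leaf d Tp' i) w)"
        using aa_conc_leaf[OF Tp' i w] 2 V(2) leaf_add_caret(3)[OF O(1) pn d rx]
          kappa_apply(3)[OF kn d, of x \<sigma> fs] kap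
        by (simp add: Tm'_def p_def)
      finally show ?thesis by simp
    qed
  qed
  then show ?thesis using kap by (simp add: Tm'_def Tp'_def p_def n_def)
qed

lemma expansion_triple_ok_aa:
  assumes e: "expansion d t t'" and d: "d \<ge> 1"
  shows "triple_ok d t \<and> triple_ok d t' \<and> aa d t' = aa d t"
proof -
  obtain Tm \<sigma> fs Tp where t: "t = (Tm, (\<sigma>, fs), Tp)" by (cases t) auto
  have ok: "triple_ok d t" using e by (simp add: expansion_def)
  obtain k where k: "k \<in> {1..nleaves d Tp}"
    and t': "t' = (add_caret d Tm (leaf d Tm (\<sigma> k)), kappa d (nleaves d Tp) k (\<sigma>, fs), add_caret d Tp (leaf d Tp k))"
    using e unfolding expansion_def t by auto
  show ?thesis using expand_triple_ok[OF ok[unfolded t] d k] aa_expand[OF ok[unfolded t] d k] ok t t' by simp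
qed

lemma equivclp_expansion_triple_ok_aa:
  assumes "equivclp (expansion d) t t'" and d: "d \<ge> 1" and ok: "triple_ok d t"
  shows "triple_ok d t' \<and> aa d t' = aa d t"
  using assms(1)
proof (induction rule: equivclp_induct)
  case base then show ?case using ok by simp
next
  case (step y z)
  then show ?case using expansion_triple_ok_aa[OF _ d] by (metis sympD symp_on_symclp symclp_def sup2E conversep_iff)
qed

section \<open>Common refinements\<close>

lemma complete_subtree_Un:
  assumes T: "complete_subtree d T" and U: "complete_subtree d U"
  shows "complete_subtree d (T \<union> U)"
proof -
  have fin: "finite (T \<union> U)" using complete_subtree_finite[OF T] complete_subtree_finite[OF U] by simp
  have nil: "[] \<in> T \<union> U" using complete_subtree_Nil[OF T] by simp
  have sub: "T \<union> U \<subseteq> words d" using complete_subtree_words[OF T] complete_subtree_words[OF U] by blast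
  have par: "\<forall>u x. u @ [x] \<in> T \<union> U \<longrightarrow> u \<in> T \<union> U" using complete_subtree_parent[OF T] complete_subtree_parent[OF U] by blast
  have ch: "\<forall>u\<in>T \<union> U. (\<forall>x\<in>{1..d}. u @ [x] \<notin> T \<union> U) \<or> (\<forall>x\<in>{1..d}. u @ [x] \<in> T \<union> U)"
  proof
    fix u assume "u \<in> T \<union> U"
    show "(\<forall>x\<in>{1..d}. u @ [x] \<notin> T \<union> U) \<or> (\<forall>x\<in>{1..d}. u @ [x] \<in> T \<union> U)"
    proof (cases "\<exists>x. u @ [x] \<in> T \<union> U")
      case True
      then obtain x where "u @ [x] \<in> T \<or> u @ [x] \<in> U" by blast
      then show ?thesis using complete_subtree_sibling[OF T, of u x] complete_subtree_sibling[OF U, of u x] by blast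
    next
      case False then show ?thesis by blast
    qed
  qed
  show ?thesis unfolding complete_subtree_def using fin nil sub par ch by blast
qed

lemma leaf_snoc_notin:
  assumes T: "complete_subtree d T" and l: "l \<in> leaves d T"
  shows "l @ [x] \<notin> T"
proof
  assume "l @ [x] \<in> T" then have "[x] = []" using leaf_ext[OF T l] by blast
  then show False by simp
qed

lemma leaf_add_caret_subset:
  assumes T: "complete_subtree d T" and S: "complete_subtree d S" and TS: "T \<subseteq> S" and ne: "T \<noteq> S"
  shows "\<exists>l\<in>leaves d T. add_caret d T l \<subseteq> S"
proof -
  have "\<exists>u. u \<in> S - T" using TS ne by blast
  then obtain u where u: "u \<in> S - T" and umin: "\<And>v. v \<in> S - T \<Longrightarrow> length u \<le> length v"
    using ex_has_least_nat[of "\<lambda>u. u \<in> S - T" _ length] by metis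
  have "u \<noteq> []" using u complete_subtree_Nil[OF T] by auto
  then obtain q x where ux: "u = q @ [x]" by (metis rev_exhaust)
  have qS: "q \<in> S" using complete_subtree_parent[OF S] u ux by blast
  have qT: "q \<in> T"
  proof (rule ccontr)
    assume "q \<notin> T" then have "length u \<le> length q" using umin qS by blast
    then show False using ux by simp
  qed
  have "q @ [x] \<in> words d" using complete_subtree_words[OF S] u ux by blast
  then have x: "x \<in> {1..d}" by simp
  have ql: "q \<in> leaves d T"
  proof -
    have "\<not> (\<forall>y\<in>{1..d}. q @ [y] \<in> T)" using u ux x by blast
    then have "\<forall>y\<in>{1..d}. q @ [y] \<notin> T" using T qT unfolding complete_subtree_def by blast
    then show ?thesis using qT by (simp add: leaves_def)
  qed
  have "\<forall>y\<in>{1..d}. q @ [y] \<in> S" using complete_subtree_sibling[OF S, of q x] u ux by blast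
  then have "add_caret d T q \<subseteq> S" using TS by (auto simp: add_caret_def)
  then show ?thesis using ql by blast
qed

lemma card_diff_add_caret_less:
  assumes T: "complete_subtree d T" and S: "complete_subtree d S" and l: "l \<in> leaves d T"
    and sub: "add_caret d T l \<subseteq> S" and d: "d \<ge> 1"
  shows "card (S - add_caret d T l) < card (S - T)"
proof (rule psubset_card_mono)
  show "finite (S - T)" using complete_subtree_finite[OF S] by simp
  have "l @ [1] \<in> add_caret d T l" using d by (auto simp: add_caret_def)
  moreover have "l @ [1] \<notin> T" using leaf_snoc_notin[OF T l] .
  ultimately show "S - add_caret d T l \<subset> S - T" using sub by (auto simp: add_caret_def)
qed

lemma expansions_reach_source:
  assumes S: "complete_subtree d S" and d: "d \<ge> 1"
  shows "triple_ok d (Tm, g, Tp) \<Longrightarrow> Tp \<subseteq> S \<Longrightarrow> \<exists>Tm' g'. (expansion d)\<^sup>*\<^sup>* (Tm, g, Tp) (Tm', g', S)"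
proof (induction "card (S - Tp)" arbitrary: Tm g Tp rule: less_induct)
  case less
  show ?case
  proof (cases "Tp = S")
    case True then show ?thesis by blast
  next
    case False
    obtain \<sigma> fs where g: "g = (\<sigma>, fs)" by (cases g) auto
    note O = triple_okD[OF less.prems(1)[unfolded g]]
    obtain l where l: "l \<in> leaves d Tp" "add_caret d Tp l \<subseteq> S" using leaf_add_caret_subset[OF O(2) S less.prems(2) False] by blast
    obtain k where k: "k \<in> {1..nleaves d Tp}" "leaf d Tp k = l" using leaf_surj[OF O(2) l(1)] by blast
    define t1 where "t1 = (add_caret d Tm (leaf d Tm (\<sigma> k)), kappa d (nleaves d Tp) k (\<sigma>, fs), add_caret d Tp (leaf d Tp k))"
    have e: "expansion d (Tm, g, Tp) t1" unfolding expansion_def t1_def using less.prems(1) k(1) g by auto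
    have ok1: "triple_ok d t1" using expansion_triple_ok_aa[OF e d] by simp
    have "card (S - add_caret d Tp l) < card (S - Tp)" using card_diff_add_caret_less[OF O(2) S l(1) l(2) d] .
    then obtain Tm' g' where "(expansion d)\<^sup>*\<^sup>* t1 (Tm', g', S)"
      using less.hyps[of "add_caret d Tp l" "add_caret d Tm (leaf d Tm (\<sigma> k))" "kappa d (nleaves d Tp) k (\<sigma>, fs)"]
        ok1 l(2) k(2) unfolding t1_def by blast
    then show ?thesis using e by (meson converse_rtranclp_into_rtranclp)
  qed
qed

lemma expansions_reach_target:
  assumes S: "complete_subtree d S" and d: "d \<ge> 1"
  shows "triple_ok d (Tm, g, Tp) \<Longrightarrow> Tm \<subseteq> S \<Longrightarrow> \<exists>g' Tp'. (expansion d)\<^sup>*\<^sup>* (Tm, g, Tp) (S, g', Tp')"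
proof (induction "card (S - Tm)" arbitrary: Tm g Tp rule: less_induct)
  case less
  show ?case
  proof (cases "Tm = S")
    case True then show ?thesis by blast
  next
    case False
    obtain \<sigma> fs where g: "g = (\<sigma>, fs)" by (cases g) auto
    note O = triple_okD[OF less.prems(1)[unfolded g]]
    obtain l where l: "l \<in> leaves d Tm" "add_caret d Tm l \<subseteq> S" using leaf_add_caret_subset[OF O(1) S less.prems(2) False] by blast
    obtain p where p: "p \<in> {1..nleaves d Tm}" "leaf d Tm p = l" using leaf_surj[OF O(1) l(1)] by blast
    have pn: "p \<in> {1..nleaves d Tp}" using p O(3) by simp
    obtain k where k: "k \<in> {1..nleaves d Tp}" "\<sigma> k = p"
      using O(4) pn by (metis permutes_inverses(1) permutes_in_image permutes_inv)
    define t1 where "t1 = (add_caret d Tm (leaf d Tm (\<sigma> k)), kappa d (nleaves d Tp) k (\<sigma>, fs), add_caret d Tp (leaf d Tp k))"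
    have e: "expansion d (Tm, g, Tp) t1" unfolding expansion_def t1_def using less.prems(1) k(1) g by auto
    have ok1: "triple_ok d t1" using expansion_triple_ok_aa[OF e d] by simp
    have "card (S - add_caret d Tm l) < card (S - Tm)" using card_diff_add_caret_less[OF O(1) S l(1) l(2) d] .
    then obtain g' Tp' where "(expansion d)\<^sup>*\<^sup>* t1 (S, g', Tp')"
      using less.hyps[of "add_caret d Tm l" "kappa d (nleaves d Tp) k (\<sigma>, fs)" "add_caret d Tp (leaf d Tp k)"]
        ok1 l(2) k(2) p(2) unfolding t1_def by blast
    then show ?thesis using e by (meson converse_rtranclp_into_rtranclp)
  qed
qed


section \<open>The action determines the class\<close>

lemma leaf_below:
  assumes T: "complete_subtree d T" and d: "d \<ge> 1"
  shows "u \<in> T \<Longrightarrow> \<exists>v. u @ v \<in> leaves d T"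
proof -
  obtain B where B: "\<forall>u\<in>T. length u < B"
    using complete_subtree_finite[OF T] by (metis finite_nat_set_iff_bounded imageI finite_imageI)
  have "\<forall>u. u \<in> T \<longrightarrow> B - length u = m \<longrightarrow> (\<exists>v. u @ v \<in> leaves d T)" for m
  proof (induction m rule: less_induct)
    case (less m)
    show ?case
    proof (intro allI impI)
      fix u assume u: "u \<in> T" and m: "B - length u = m"
      show "\<exists>v. u @ v \<in> leaves d T"
      proof (cases "u \<in> leaves d T")
        case True then show ?thesis by (metis append_Nil2)
      next
        case False
        then obtain x where x: "x \<in> {1..d}" "u @ [x] \<in> T" using u by (auto simp: leaves_def)
        have "length (u @ [x]) < B" using B x(2) by blast
        then have "B - length (u @ [x]) < m" using m by simp
        then obtain v where "u @ [x] @ v \<in> leaves d T" using less.IH x(2) by fastforce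
        then show ?thesis by blast
      qed
    qed
  qed
  then show "u \<in> T \<Longrightarrow> \<exists>v. u @ v \<in> leaves d T" by blast
qed

lemma complete_subtree_eq_if_leaves_eq:
  assumes T: "complete_subtree d T" and U: "complete_subtree d U" and d: "d \<ge> 1"
    and e: "leaves d T = leaves d U"
  shows "T = U"
proof -
  have *: "X \<subseteq> Y" if X: "complete_subtree d X" and Y: "complete_subtree d Y" and e: "leaves d X = leaves d Y" for X Y
  proof
    fix u assume "u \<in> X"
    then obtain v where "u @ v \<in> leaves d X" using leaf_below[OF X d] by blast
    then have "u @ v \<in> Y" using e leaves_subset by blast
    then show "u \<in> Y" using complete_subtree_prefix[OF Y] by blast
  qed
  show ?thesis using *[OF T U e] *[OF U T e[symmetric]] by blast
qed

lemma leaves_eq_image_leaf: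
  assumes T: "complete_subtree d T"
  shows "leaves d T = leaf d T ` {1..nleaves d T}"
proof
  show "leaf d T ` {1..nleaves d T} \<subseteq> leaves d T" using leaf_in_leaves[OF T] by blast
  show "leaves d T \<subseteq> leaf d T ` {1..nleaves d T}"
  proof
    fix l assume "l \<in> leaves d T"
    then obtain i where "i \<in> {1..nleaves d T}" "leaf d T i = l" using leaf_surj[OF T] by blast
    then show "l \<in> leaf d T ` {1..nleaves d T}" by blast
  qed
qed

lemma aut_bd_zero:
  assumes f: "tree_aut d f" and w: "w \<in> boundary d"
  shows "aut_bd f w 0 = aut_rho d f (w 0)"
proof -
  have "w 0 \<in> {1..d}" using w by (simp add: boundary_def)
  then show ?thesis using tree_aut_single(1)[OF f] by (simp add: aut_bd_def)
qed

text \<open>This is where d \<ge> 2 is needed: for d = 1 the boundary is a single point.\<close>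
lemma conc_aut_bd_eq_imp_eq:
  assumes d: "d \<ge> 2" and f: "tree_aut d f" and f': "tree_aut d f'"
    and eq: "\<And>w. w \<in> boundary d \<Longrightarrow> conc u (aut_bd f w) = conc u' (aut_bd f' w)"
  shows "u = u'"
proof -
  have nolt: "False" if lt: "length a < length b" and g: "tree_aut d g"
    and e: "\<And>w. w \<in> boundary d \<Longrightarrow> conc a (aut_bd g w) = conc b (aut_bd g' w)" for a b g g'
  proof -
    have w1: "(\<lambda>_. 1) \<in> boundary d" and w2: "(\<lambda>_. 2) \<in> boundary d" using d by (auto simp: boundary_def)
    have "conc a (aut_bd g (\<lambda>_. 1)) (length a) = conc b (aut_bd g' (\<lambda>_. 1)) (length a)" using e[OF w1] by simp
    then have 1: "aut_rho d g 1 = b ! length a" using lt aut_bd_zero[OF g w1] by (simp add: conc_def)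
    have "conc a (aut_bd g (\<lambda>_. 2)) (length a) = conc b (aut_bd g' (\<lambda>_. 2)) (length a)" using e[OF w2] by simp
    then have 2: "aut_rho d g 2 = b ! length a" using lt aut_bd_zero[OF g w2] by (simp add: conc_def)
    have "(1::nat) = 2" using aut_rho_inj[OF g, of 1 2] 1 2 d by simp
    then show False by simp
  qed
  have len: "length u = length u'"
    using nolt[of u u' f f'] nolt[of u' u f' f] eq f f' by (metis linorder_neqE_nat)
  show ?thesis
  proof (rule nth_equalityI)
    show "length u = length u'" by (fact len)
    fix i assume i: "i < length u"
    have w: "(\<lambda>_. 1) \<in> boundary d" using d by (simp add: boundary_def)
    have "conc u (aut_bd f (\<lambda>_. 1)) i = conc u' (aut_bd f' (\<lambda>_. 1)) i" using eq[OF w] by simp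
    then show "u ! i = u' ! i" using i len by (simp add: conc_def)
  qed
qed

lemma aa_eq_imp_leaf_state_eq:
  assumes d: "d \<ge> 2"
    and ok: "triple_ok d (Tm, (\<sigma>, fs), Tp)" and ok': "triple_ok d (Tm', (\<sigma>', fs'), Tp)"
    and e: "aa d (Tm, (\<sigma>, fs), Tp) = aa d (Tm', (\<sigma>', fs'), Tp)"
    and i: "i \<in> {1..nleaves d Tp}"
  shows "leaf d Tm (\<sigma> i) = leaf d Tm' (\<sigma>' i) \<and> fs i = fs' i"
proof -
  note O = triple_okD[OF ok] and O' = triple_okD[OF ok']
  have eqw: "conc (leaf d Tm (\<sigma> i)) (aut_bd (fs i) w) = conc (leaf d Tm' (\<sigma>' i)) (aut_bd (fs' i) w)"
    if w: "w \<in> boundary d" for w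
    using aa_conc_leaf[OF O(2) i w, of Tm \<sigma> fs] aa_conc_leaf[OF O(2) i w, of Tm' \<sigma>' fs'] e by simp
  have u: "leaf d Tm (\<sigma> i) = leaf d Tm' (\<sigma>' i)"
    using conc_aut_bd_eq_imp_eq[OF d O(5)[OF i] O'(5)[OF i] eqw] .
  have "aut_bd (fs i) w = aut_bd (fs' i) w" if w: "w \<in> boundary d" for w
    using arg_cong[OF eqw[OF w], of "sdrop (length (leaf d Tm (\<sigma> i)))"] u by (simp add: sdrop_conc)
  moreover have "d \<ge> 1" using d by simp
  ultimately have "fs i = fs' i" using aut_bd_determines[OF O(5)[OF i] O'(5)[OF i]] by blast
  then show ?thesis using u by simp
qed

lemma aa_eq_same_source_imp_eq:
  assumes d: "d \<ge> 2"
    and ok: "triple_ok d (Tm, (\<sigma>, fs), Tp)" and ok': "triple_ok d (Tm', (\<sigma>', fs'), Tp)"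
    and e: "aa d (Tm, (\<sigma>, fs), Tp) = aa d (Tm', (\<sigma>', fs'), Tp)"
  shows "Tm = Tm' \<and> \<sigma> = \<sigma>' \<and> fs = fs'"
proof -
  note O = triple_okD[OF ok] and O' = triple_okD[OF ok']
  define n where "n = nleaves d Tp"
  have d1: "d \<ge> 1" using d by simp
  have key: "leaf d Tm (\<sigma> i) = leaf d Tm' (\<sigma>' i) \<and> fs i = fs' i" if "i \<in> {1..n}" for i
    using aa_eq_imp_leaf_state_eq[OF d ok ok' e] that by (simp add: n_def)
  have fs: "fs = fs'"
  proof
    fix i show "fs i = fs' i"
      using key[of i] O(6)[of i] O'(6)[of i] by (cases "i \<in> {1..n}") (auto simp: n_def)
  qed
  have \<sigma>n: "\<sigma> permutes {1..n}" "\<sigma>' permutes {1..n}" using O(4) O'(4) by (simp_all add: n_def)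
  have "leaves d Tm = leaf d Tm ` {1..n}" using leaves_eq_image_leaf[OF O(1)] O(3) by (simp add: n_def)
  also have "\<dots> = leaf d Tm ` \<sigma> ` {1..n}" using permutes_image[OF \<sigma>n(1)] by simp
  also have "\<dots> = leaf d Tm' ` \<sigma>' ` {1..n}"
  proof -
    have "leaf d Tm ` \<sigma> ` {1..n} = (\<lambda>i. leaf d Tm (\<sigma> i)) ` {1..n}" by (simp add: image_image)
    also have "\<dots> = (\<lambda>i. leaf d Tm' (\<sigma>' i)) ` {1..n}" using key by (intro image_cong) auto
    also have "\<dots> = leaf d Tm' ` \<sigma>' ` {1..n}" by (simp add: image_image)
    finally show ?thesis .
  qed
  also have "\<dots> = leaf d Tm' ` {1..n}" using permutes_image[OF \<sigma>n(2)] by simp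
  also have "\<dots> = leaves d Tm'" using leaves_eq_image_leaf[OF O'(1)] O'(3) by (simp add: n_def)
  finally have TT: "Tm = Tm'" using complete_subtree_eq_if_leaves_eq[OF O(1) O'(1) d1] by simp
  have "\<sigma> i = \<sigma>' i" for i
  proof (cases "i \<in> {1..n}")
    case True
    have "\<sigma> i \<in> {1..nleaves d Tm}" "\<sigma>' i \<in> {1..nleaves d Tm}"
      using bij_betw_apply[OF permutes_imp_bij[OF \<sigma>n(1)] True] bij_betw_apply[OF permutes_imp_bij[OF \<sigma>n(2)] True] O(3) by (simp_all add: n_def)
    then show ?thesis using leaf_inj[OF O(1)] key[OF True] TT by metis
  next
    case False then show ?thesis using \<sigma>n by (simp add: permutes_def)
  qed
  then show ?thesis using TT fs by auto
qed

lemma equivclp_expansion_if_aa_eq: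
  assumes d: "d \<ge> 2" and ok: "triple_ok d t" and ok': "triple_ok d t'" and e: "aa d t = aa d t'"
  shows "equivclp (expansion d) t t'"
proof -
  have d1: "d \<ge> 1" using d by simp
  obtain Tm g Tp where t: "t = (Tm, g, Tp)" by (cases t) auto
  obtain Tm2 g2 Tp2 where t': "t' = (Tm2, g2, Tp2)" by (cases t') auto
  let ?S = "Tp \<union> Tp2"
  have S: "complete_subtree d ?S"
    using complete_subtree_Un triple_okD(2) ok ok' t t' by (metis prod.collapse)
  obtain A h1 where r1: "(expansion d)\<^sup>*\<^sup>* t (A, h1, ?S)" using expansions_reach_source[OF S d1, of Tm g Tp] ok t by auto
  obtain B h2 where r2: "(expansion d)\<^sup>*\<^sup>* t' (B, h2, ?S)" using expansions_reach_source[OF S d1, of Tm2 g2 Tp2] ok' t' by auto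
  have q1: "equivclp (expansion d) t (A, h1, ?S)" using rtranclp_into_equivclp[OF r1] .
  have q2: "equivclp (expansion d) t' (B, h2, ?S)" using rtranclp_into_equivclp[OF r2] .
  have o1: "triple_ok d (A, h1, ?S) \<and> aa d (A, h1, ?S) = aa d t" using equivclp_expansion_triple_ok_aa[OF q1 d1 ok] .
  have o2: "triple_ok d (B, h2, ?S) \<and> aa d (B, h2, ?S) = aa d t'" using equivclp_expansion_triple_ok_aa[OF q2 d1 ok'] .
  obtain \<sigma>1 f1 where h1: "h1 = (\<sigma>1, f1)" by (cases h1) auto
  obtain \<sigma>2 f2 where h2: "h2 = (\<sigma>2, f2)" by (cases h2) auto
  have "A = B \<and> \<sigma>1 = \<sigma>2 \<and> f1 = f2" using aa_eq_same_source_imp_eq[OF d, of A \<sigma>1 f1 ?S B \<sigma>2 f2] o1 o2 e h1 h2 by simp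
  then have "(A, h1, ?S) = (B, h2, ?S)" using h1 h2 by simp
  then show ?thesis using q1 q2 by (metis equivclp_sym equivclp_trans)
qed

section \<open>Products and inverses of triples\<close>

lemma wr_mult_triple_ok_aa:
  assumes ok1: "triple_ok d (Tm, (\<sigma>, f), T)" and ok2: "triple_ok d (T, (\<tau>, g), Tp)"
  shows "triple_ok d (Tm, wr_mult (nleaves d T) (\<sigma>, f) (\<tau>, g), Tp)
    \<and> aa d (Tm, wr_mult (nleaves d T) (\<sigma>, f) (\<tau>, g), Tp) = aa d (Tm, (\<sigma>, f), T) \<circ> aa d (T, (\<tau>, g), Tp)"
proof -
  note O1 = triple_okD[OF ok1] and O2 = triple_okD[OF ok2]
  define n where "n = nleaves d T"
  have nTp: "nleaves d Tp = n" using O2(3) by (simp add: n_def)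
  define h where "h = (\<lambda>i. if i \<in> {1..n} then f (\<tau> i) \<circ> g i else id)"
  have w: "wr_mult (nleaves d T) (\<sigma>, f) (\<tau>, g) = (\<sigma> \<circ> \<tau>, h)" by (simp add: wr_mult_def h_def n_def)
  have \<tau>: "\<tau> permutes {1..n}" using O2(4) nTp by simp
  have \<sigma>: "\<sigma> permutes {1..n}" using O1(4) by (simp add: n_def)
  have st: "\<sigma> \<circ> \<tau> permutes {1..nleaves d Tp}" using permutes_compose[OF \<tau> \<sigma>] nTp by simp
  have haut: "tree_aut d (h i)" if "i \<in> {1..nleaves d Tp}" for i
  proof -
    have i: "i \<in> {1..n}" using that nTp by simp
    have "\<tau> i \<in> {1..nleaves d T}" using bij_betw_apply[OF permutes_imp_bij[OF \<tau>] i] by (simp add: n_def)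
    then show ?thesis using tree_aut_comp[OF O1(5) O2(5)[OF that]] i by (simp add: h_def)
  qed
  have hout: "h i = id" if "i \<notin> {1..nleaves d Tp}" for i using that nTp unfolding h_def by auto
  have ok: "triple_ok d (Tm, (\<sigma> \<circ> \<tau>, h), Tp)"
    unfolding triple_ok_def using O1(1) O2(2) O1(3) nTp st haut hout by (simp add: n_def)
  have aa: "aa d (Tm, (\<sigma> \<circ> \<tau>, h), Tp) = aa d (Tm, (\<sigma>, f), T) \<circ> aa d (T, (\<tau>, g), Tp)"
  proof
    fix \<xi>
    show "aa d (Tm, (\<sigma> \<circ> \<tau>, h), Tp) \<xi> = (aa d (Tm, (\<sigma>, f), T) \<circ> aa d (T, (\<tau>, g), Tp)) \<xi>"
    proof (cases "\<xi> \<in> boundary d")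
      case False then show ?thesis by (simp add: aa_out)
    next
      case True
      then obtain i w where i: "i \<in> {1..nleaves d Tp}" and w: "w \<in> boundary d" and xi: "\<xi> = conc (leaf d Tp i) w"
        using boundary_conc_leaf[OF O2(2)] by blast
      have i': "i \<in> {1..n}" using i nTp by simp
      have ti: "\<tau> i \<in> {1..nleaves d T}" using bij_betw_apply[OF permutes_imp_bij[OF \<tau>] i'] by (simp add: n_def)
      have gw: "aut_bd (g i) w \<in> boundary d" using aut_bd_boundary[OF O2(5)[OF i] w] .
      have "(aa d (Tm, (\<sigma>, f), T) \<circ> aa d (T, (\<tau>, g), Tp)) \<xi>
          = aa d (Tm, (\<sigma>, f), T) (conc (leaf d T (\<tau> i)) (aut_bd (g i) w))"
        using aa_conc_leaf[OF O2(2) i w] xi by simp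
      also have "\<dots> = conc (leaf d Tm (\<sigma> (\<tau> i))) (aut_bd (f (\<tau> i)) (aut_bd (g i) w))"
        using aa_conc_leaf[OF O1(2) ti gw] .
      also have "\<dots> = conc (leaf d Tm (\<sigma> (\<tau> i))) (aut_bd (h i) w)"
        using aut_bd_comp[OF O1(5)[OF ti] O2(5)[OF i] w] i' by (simp add: h_def)
      also have "\<dots> = aa d (Tm, (\<sigma> \<circ> \<tau>, h), Tp) \<xi>" using aa_conc_leaf[OF O2(2) i w] xi by simp
      finally show ?thesis by simp
    qed
  qed
  show ?thesis using ok aa w by simp
qed

lemma aa_identity:
  assumes T: "complete_subtree d T"
  shows "aa d (T, (id, \<lambda>i. id), T) = id"
proof
  fix \<xi>
  show "aa d (T, (id, \<lambda>i. id), T) \<xi> = id \<xi>"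
  proof (cases "\<xi> \<in> boundary d")
    case False then show ?thesis by (simp add: aa_out)
  next
    case True
    then obtain i w where i: "i \<in> {1..nleaves d T}" and w: "w \<in> boundary d" and xi: "\<xi> = conc (leaf d T i) w"
      using boundary_conc_leaf[OF T] by blast
    show ?thesis using aa_conc_leaf[OF T i w, of T id "\<lambda>i. id"] xi by (simp add: aut_bd_id)
  qed
qed

lemma complete_subtree_root: "complete_subtree d {[]}"
  by (simp add: complete_subtree_def)

lemma leaves_root: "leaves d {[]} = {[]}"
  by (auto simp: leaves_def)

lemma nleaves_root: "nleaves d {[]} = 1"
  by (simp add: nleaves_def leaves_root)

lemma triple_ok_root: "triple_ok d ({[]}, (id, \<lambda>i. id), {[]})"
  unfolding triple_ok_def using complete_subtree_root nleaves_root tree_aut_id by (simp add: permutes_id)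

lemma triple_left_inverse:
  assumes ok: "triple_ok d (Tm, (\<sigma>, f), Tp)"
  shows "\<exists>t'. triple_ok d t' \<and> aa d t' \<circ> aa d (Tm, (\<sigma>, f), Tp) = id"
proof -
  note O = triple_okD[OF ok]
  define n where "n = nleaves d Tp"
  have \<sigma>: "\<sigma> permutes {1..n}" using O(4) by (simp add: n_def)
  define h where "h = (\<lambda>i. if i \<in> {1..n} then tree_aut_inv d (f (inv_into UNIV \<sigma> i)) else id)"
  have \<sigma>i: "inv_into UNIV \<sigma> permutes {1..n}" using permutes_inv[OF \<sigma>] .
  have ok': "triple_ok d (Tp, (inv_into UNIV \<sigma>, h), Tm)"
    unfolding triple_ok_def prod.case
  proof (intro conjI ballI allI impI)
    show "complete_subtree d Tp" "complete_subtree d Tm" using O by auto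
    show "nleaves d Tp = nleaves d Tm" using O(3) by simp
    show "inv_into UNIV \<sigma> permutes {1..nleaves d Tm}" using \<sigma>i O(3) by (simp add: n_def)
    show "tree_aut d (h i)" if "i \<in> {1..nleaves d Tm}" for i
    proof -
      have i: "i \<in> {1..n}" using that O(3) by (simp add: n_def)
      have "inv_into UNIV \<sigma> i \<in> {1..nleaves d Tp}" using bij_betw_apply[OF permutes_imp_bij[OF \<sigma>i] i] by (simp add: n_def)
      then show ?thesis using tree_aut_tree_aut_inv[OF O(5)] i by (simp add: h_def)
    qed
    show "h i = id" if "i \<notin> {1..nleaves d Tm}" for i using that O(3) unfolding h_def n_def by auto
  qed
  have prod: "triple_ok d (Tp, wr_mult (nleaves d Tm) (inv_into UNIV \<sigma>, h) (\<sigma>, f), Tp)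
    \<and> aa d (Tp, wr_mult (nleaves d Tm) (inv_into UNIV \<sigma>, h) (\<sigma>, f), Tp) = aa d (Tp, (inv_into UNIV \<sigma>, h), Tm) \<circ> aa d (Tm, (\<sigma>, f), Tp)"
    using wr_mult_triple_ok_aa[OF ok' ok] .
  have "wr_mult (nleaves d Tm) (inv_into UNIV \<sigma>, h) (\<sigma>, f) = (id, \<lambda>i. id)"
  proof -
    have "inv_into UNIV \<sigma> \<circ> \<sigma> = id" using permutes_inv_o(2)[OF \<sigma>] .
    moreover have "(\<lambda>i. if i \<in> {1..nleaves d Tm} then h (\<sigma> i) \<circ> f i else id) = (\<lambda>i. id)"
    proof
      fix i show "(if i \<in> {1..nleaves d Tm} then h (\<sigma> i) \<circ> f i else id) = id"
      proof (cases "i \<in> {1..nleaves d Tm}")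
        case True
        then have i: "i \<in> {1..n}" using O(3) by (simp add: n_def)
        have "h (\<sigma> i) = tree_aut_inv d (f i)" using bij_betw_apply[OF permutes_imp_bij[OF \<sigma>] i] permutes_inverses(2)[OF \<sigma>] by (simp add: h_def)
        then show ?thesis using True tree_aut_inv_comp[OF O(5)] i by (simp add: n_def)
      next
        case False then show ?thesis by (rule if_not_P)
      qed
    qed
    ultimately show ?thesis by (simp add: wr_mult_def)
  qed
  then have "aa d (Tp, (inv_into UNIV \<sigma>, h), Tm) \<circ> aa d (Tm, (\<sigma>, f), Tp) = id"
    using prod aa_identity[OF O(2)] by simp
  then show ?thesis using ok' by blast
qed

section \<open>Equivalence classes of triples\<close>

lemma tclass_refl: "t \<in> tclass d t" by (simp add: tclass_def)

lemma tclass_triple_ok_aa: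
  assumes d: "d \<ge> 1" and ok: "triple_ok d t" and m: "t' \<in> tclass d t"
  shows "triple_ok d t' \<and> aa d t' = aa d t"
proof -
  have "equivclp (expansion d) t t'" using m by (simp add: tclass_def)
  then show ?thesis by (rule equivclp_expansion_triple_ok_aa[OF _ d ok])
qed

lemma tclass_eqI:
  assumes "equivclp (expansion d) t t'"
  shows "tclass d t = tclass d t'"
proof -
  have "equivclp (expansion d) t s \<longleftrightarrow> equivclp (expansion d) t' s" for s
    using assms equivclp_sym[OF assms] equivclp_trans by metis
  then show ?thesis unfolding tclass_def by blast
qed

lemma tclass_eq_iff_aa_eq:
  assumes d: "d \<ge> 2" and ok: "triple_ok d t" and ok': "triple_ok d t'"
  shows "tclass d t = tclass d t' \<longleftrightarrow> aa d t = aa d t'"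
proof
  assume "tclass d t = tclass d t'"
  then have "t' \<in> tclass d t" using tclass_refl by metis
  then show "aa d t = aa d t'" using tclass_triple_ok_aa[OF _ ok] d by simp
next
  assume "aa d t = aa d t'"
  then show "tclass d t = tclass d t'" using tclass_eqI equivclp_expansion_if_aa_eq[OF d ok ok'] by blast
qed

lemma aa_some_tclass:
  assumes d: "d \<ge> 1" and ok: "triple_ok d t"
  shows "aa d (SOME s. s \<in> tclass d t) = aa d t"
proof -
  have "(SOME s. s \<in> tclass d t) \<in> tclass d t" using someI[of "\<lambda>s. s \<in> tclass d t" t] tclass_refl by metis
  then show ?thesis using tclass_triple_ok_aa[OF d ok] by blast
qed

lemma tclass_common_middle:
  assumes d: "d \<ge> 1" and ok1: "triple_ok d t1" and ok2: "triple_ok d t2"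
  shows "\<exists>Tm f T g Tp. (Tm, f, T) \<in> tclass d t1 \<and> (T, g, Tp) \<in> tclass d t2"
proof -
  obtain A g1 B where t1: "t1 = (A, g1, B)" by (cases t1) auto
  obtain C g2 E where t2: "t2 = (C, g2, E)" by (cases t2) auto
  have cB: "complete_subtree d B" and cC: "complete_subtree d C"
    using triple_okD ok1 ok2 t1 t2 by (metis prod.collapse)+
  let ?S = "B \<union> C"
  have S: "complete_subtree d ?S" using complete_subtree_Un[OF cB cC] .
  obtain A' h1 where r1: "(expansion d)\<^sup>*\<^sup>* t1 (A', h1, ?S)" using expansions_reach_source[OF S d, of A g1 B] ok1 t1 by auto
  obtain h2 E' where r2: "(expansion d)\<^sup>*\<^sup>* t2 (?S, h2, E')" using expansions_reach_target[OF S d, of C g2 E] ok2 t2 by auto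
  have "(A', h1, ?S) \<in> tclass d t1" "(?S, h2, E') \<in> tclass d t2"
    using rtranclp_into_equivclp[OF r1] rtranclp_into_equivclp[OF r2] by (simp_all add: tclass_def)
  then show ?thesis by blast
qed

lemma tclass_wr_mult_triple_ok_aa:
  assumes d: "d \<ge> 1" and ok1: "triple_ok d t1" and ok2: "triple_ok d t2"
    and m1: "(Tm, f, T) \<in> tclass d t1" and m2: "(T, g, Tp) \<in> tclass d t2"
  shows "triple_ok d (Tm, wr_mult (nleaves d T) f g, Tp)
    \<and> aa d (Tm, wr_mult (nleaves d T) f g, Tp) = aa d t1 \<circ> aa d t2"
proof -
  have a: "triple_ok d (Tm, f, T) \<and> aa d (Tm, f, T) = aa d t1" using tclass_triple_ok_aa[OF d ok1 m1] .
  have b: "triple_ok d (T, g, Tp) \<and> aa d (T, g, Tp) = aa d t2" using tclass_triple_ok_aa[OF d ok2 m2] .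
  obtain \<sigma> fs where f: "f = (\<sigma>, fs)" by (cases f) auto
  obtain \<tau> gs where g: "g = (\<tau>, gs)" by (cases g) auto
  show ?thesis using wr_mult_triple_ok_aa[of d Tm \<sigma> fs T \<tau> gs Tp] a b f g by simp
qed

text \<open>The product is independent of the chosen representatives because any two
  candidates have the same action and hence are the same class.\<close>
lemma tmult_tclass:
  assumes d: "d \<ge> 2" and ok1: "triple_ok d t1" and ok2: "triple_ok d t2"
    and m1: "(Tm, f, T) \<in> tclass d t1" and m2: "(T, g, Tp) \<in> tclass d t2"
  shows "tmult d (tclass d t1) (tclass d t2) = tclass d (Tm, wr_mult (nleaves d T) f g, Tp)"
proof -
  have d1: "d \<ge> 1" using d by simp
  let ?P = "\<lambda>Z. \<exists>Tm f T g Tp. (Tm, f, T) \<in> tclass d t1 \<and> (T, g, Tp) \<in> tclass d t2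
       \<and> Z = tclass d (Tm, wr_mult (nleaves d T) f g, Tp)"
  have "?P (tclass d (Tm, wr_mult (nleaves d T) f g, Tp))" using m1 m2 by blast
  then have "?P (SOME Z. ?P Z)" by (rule someI)
  then obtain Tm2 f2 T2 g2 Tp2 where n1: "(Tm2, f2, T2) \<in> tclass d t1" and n2: "(T2, g2, Tp2) \<in> tclass d t2"
    and Z: "(SOME Z. ?P Z) = tclass d (Tm2, wr_mult (nleaves d T2) f2 g2, Tp2)" by blast
  have "tmult d (tclass d t1) (tclass d t2) = (SOME Z. ?P Z)" unfolding tmult_def by simp
  also have "\<dots> = tclass d (Tm, wr_mult (nleaves d T) f g, Tp)"
    using Z tclass_eq_iff_aa_eq[OF d] tclass_wr_mult_triple_ok_aa[OF d1 ok1 ok2 m1 m2]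
      tclass_wr_mult_triple_ok_aa[OF d1 ok1 ok2 n1 n2] by simp
  finally show ?thesis .
qed

lemma tmult_tclass_obtain:
  assumes d: "d \<ge> 2" and ok1: "triple_ok d t1" and ok2: "triple_ok d t2"
  obtains p where "triple_ok d p" "tmult d (tclass d t1) (tclass d t2) = tclass d p"
    "aa d p = aa d t1 \<circ> aa d t2"
proof -
  have d1: "d \<ge> 1" using d by simp
  obtain Tm f T g Tp where m1: "(Tm, f, T) \<in> tclass d t1" and m2: "(T, g, Tp) \<in> tclass d t2"
    using tclass_common_middle[OF d1 ok1 ok2] by blast
  show ?thesis
    using that tmult_tclass[OF d ok1 ok2 m1 m2] tclass_wr_mult_triple_ok_aa[OF d1 ok1 ok2 m1 m2] by blast
qed

section \<open>Almost automorphisms\<close>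

lemma aa_in_AAut: "triple_ok d t \<Longrightarrow> aa d t \<in> AAut d"
  unfolding AAut_def triple_ok_def by (cases t) auto

text \<open>The definition of AAut does not require the states off the leaf indices to be
  the identity; normalising them does not change the action.\<close>
lemma AAut_obtain_triple:
  assumes "F \<in> AAut d"
  obtains t where "triple_ok d t" "aa d t = F"
proof -
  obtain Tm \<sigma> fs Tp where F: "F = aa d (Tm, (\<sigma>, fs), Tp)" and c: "complete_subtree d Tm" "complete_subtree d Tp"
    "nleaves d Tm = nleaves d Tp" "\<sigma> permutes {1..nleaves d Tp}" "\<forall>i\<in>{1..nleaves d Tp}. tree_aut d (fs i)"
    using assms unfolding AAut_def by blast
  define fs' where "fs' = (\<lambda>i. if i \<in> {1..nleaves d Tp} then fs i else id)"
  have ok: "triple_ok d (Tm, (\<sigma>, fs'), Tp)" unfolding triple_ok_def fs'_def using c by auto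
  have "aa d (Tm, (\<sigma>, fs'), Tp) = aa d (Tm, (\<sigma>, fs), Tp)"
  proof (rule aa_eqI[OF c(2)])
    fix i w assume i: "i \<in> {1..nleaves d Tp}" and w: "w \<in> boundary d"
    show "aa d (Tm, (\<sigma>, fs'), Tp) (conc (leaf d Tp i) w) = aa d (Tm, (\<sigma>, fs), Tp) (conc (leaf d Tp i) w)"
      using aa_conc_leaf[OF c(2) i w, of Tm \<sigma> fs'] aa_conc_leaf[OF c(2) i w, of Tm \<sigma> fs] i by (simp add: fs'_def)
  qed
  then show ?thesis using that ok F by blast
qed

lemma id_in_AAut: "id \<in> AAut d"
  using aa_in_AAut[OF triple_ok_root] aa_identity[OF complete_subtree_root] by metis

lemma group_AAutG:
  assumes d: "d \<ge> 1"
  shows "group (AAutG d)"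
proof (rule groupI)
  show "x \<otimes>\<^bsub>AAutG d\<^esub> y \<in> carrier (AAutG d)" if "x \<in> carrier (AAutG d)" "y \<in> carrier (AAutG d)" for x y
  proof -
    have "x \<in> AAut d" "y \<in> AAut d" using that by (simp_all add: AAutG_def)
    then obtain t1 t2 where t: "triple_ok d t1" "aa d t1 = x" "triple_ok d t2" "aa d t2 = y"
      by (meson AAut_obtain_triple)
    obtain Tm f T g Tp where "(Tm, f, T) \<in> tclass d t1" "(T, g, Tp) \<in> tclass d t2"
      using tclass_common_middle[OF d t(1) t(3)] by blast
    then have "aa d t1 \<circ> aa d t2 \<in> AAut d"
      using tclass_wr_mult_triple_ok_aa[OF d t(1) t(3)] aa_in_AAut by metis
    then show ?thesis using t by (simp add: AAutG_def)
  qed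
  show "\<one>\<^bsub>AAutG d\<^esub> \<in> carrier (AAutG d)" using id_in_AAut by (simp add: AAutG_def)
  show "x \<otimes>\<^bsub>AAutG d\<^esub> y \<otimes>\<^bsub>AAutG d\<^esub> z = x \<otimes>\<^bsub>AAutG d\<^esub> (y \<otimes>\<^bsub>AAutG d\<^esub> z)" for x y z
    by (simp add: AAutG_def o_assoc)
  show "\<one>\<^bsub>AAutG d\<^esub> \<otimes>\<^bsub>AAutG d\<^esub> x = x" for x by (simp add: AAutG_def)
  show "\<exists>y\<in>carrier (AAutG d). y \<otimes>\<^bsub>AAutG d\<^esub> x = \<one>\<^bsub>AAutG d\<^esub>" if "x \<in> carrier (AAutG d)" for x
  proof -
    have "x \<in> AAut d" using that by (simp add: AAutG_def)
    then obtain t where t: "triple_ok d t" "aa d t = x" by (rule AAut_obtain_triple)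
    moreover obtain Tm \<sigma> f Tp where "t = (Tm, (\<sigma>, f), Tp)" by (metis prod.collapse)
    ultimately obtain t' where "triple_ok d t'" "aa d t' \<circ> x = id"
      using triple_left_inverse by blast
    then show ?thesis using aa_in_AAut[of d t'] by (auto simp: AAutG_def)
  qed
qed

section \<open>The isomorphism\<close>

lemma group_pullback:
  fixes G :: "('a, 'c) monoid_scheme" and H :: "('b, 'e) monoid_scheme"
  assumes H: "group H" and bij: "bij_betw \<phi> (carrier G) (carrier H)"
    and closed: "\<And>x y. x \<in> carrier G \<Longrightarrow> y \<in> carrier G \<Longrightarrow> x \<otimes>\<^bsub>G\<^esub> y \<in> carrier G"
    and mult: "\<And>x y. x \<in> carrier G \<Longrightarrow> y \<in> carrier G \<Longrightarrow> \<phi> (x \<otimes>\<^bsub>G\<^esub> y) = \<phi> x \<otimes>\<^bsub>H\<^esub> \<phi> y"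
    and one: "\<one>\<^bsub>G\<^esub> \<in> carrier G" "\<phi> \<one>\<^bsub>G\<^esub> = \<one>\<^bsub>H\<^esub>"
  shows "group G"
proof (rule groupI)
  have inj: "x = y" if "x \<in> carrier G" "y \<in> carrier G" "\<phi> x = \<phi> y" for x y
    using bij that by (auto simp: bij_betw_def inj_on_def)
  have into: "\<phi> x \<in> carrier H" if "x \<in> carrier G" for x
    using bij_betw_apply[OF bij that] .
  show "x \<otimes>\<^bsub>G\<^esub> y \<in> carrier G" if "x \<in> carrier G" "y \<in> carrier G" for x y
    using closed[OF that] .
  show "\<one>\<^bsub>G\<^esub> \<in> carrier G" by (fact one(1))
  show "x \<otimes>\<^bsub>G\<^esub> y \<otimes>\<^bsub>G\<^esub> z = x \<otimes>\<^bsub>G\<^esub> (y \<otimes>\<^bsub>G\<^esub> z)"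
    if "x \<in> carrier G" "y \<in> carrier G" "z \<in> carrier G" for x y z
    using that by (intro inj) (simp_all add: closed mult into group.is_monoid[OF H] monoid.m_assoc)
  show "\<one>\<^bsub>G\<^esub> \<otimes>\<^bsub>G\<^esub> x = x" if "x \<in> carrier G" for x
    using that by (intro inj) (simp_all add: closed mult into one group.is_monoid[OF H] monoid.l_one)
  show "\<exists>y\<in>carrier G. y \<otimes>\<^bsub>G\<^esub> x = \<one>\<^bsub>G\<^esub>" if x: "x \<in> carrier G" for x
  proof
    let ?y = "inv_into (carrier G) \<phi> (inv\<^bsub>H\<^esub> \<phi> x)"
    have inv: "inv\<^bsub>H\<^esub> \<phi> x \<in> \<phi> ` carrier G"
      using group.inv_closed[OF H into[OF x]] bij by (simp add: bij_betw_def)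
    show y: "?y \<in> carrier G" using inv_into_into[OF inv] .
    have "\<phi> ?y = inv\<^bsub>H\<^esub> \<phi> x" using f_inv_into_f[OF inv] .
    then show "?y \<otimes>\<^bsub>G\<^esub> x = \<one>\<^bsub>G\<^esub>"
      using x y by (intro inj) (simp_all add: closed mult into one group.l_inv[OF H])
  qed
qed

lemma Thompson_carrierI: "triple_ok d t \<Longrightarrow> tclass d t \<in> carrier (Thompson d)"
  unfolding Thompson_def partial_object.select_convs by blast

lemma Thompson_carrierE:
  assumes "X \<in> carrier (Thompson d)"
  obtains t where "triple_ok d t" "X = tclass d t"
  using assms unfolding Thompson_def partial_object.select_convs by blast

lemma Thompson_mult: "X \<otimes>\<^bsub>Thompson d\<^esub> Y = tmult d X Y"
  by (simp add: Thompson_def)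

lemma Thompson_one: "\<one>\<^bsub>Thompson d\<^esub> = tclass d ({[]}, (id, \<lambda>i. id), {[]})"
  by (simp add: Thompson_def)

lemma Thompson_mult_closed_aa:
  assumes d: "d \<ge> 2" and X: "X \<in> carrier (Thompson d)" and Y: "Y \<in> carrier (Thompson d)"
  shows "X \<otimes>\<^bsub>Thompson d\<^esub> Y \<in> carrier (Thompson d)"
    and "aa d (SOME t. t \<in> X \<otimes>\<^bsub>Thompson d\<^esub> Y) = aa d (SOME t. t \<in> X) \<circ> aa d (SOME t. t \<in> Y)"
proof -
  have d1: "d \<ge> 1" using d by simp
  obtain t1 t2 where t: "triple_ok d t1" "X = tclass d t1" "triple_ok d t2" "Y = tclass d t2"
    using X Y by (metis Thompson_carrierE)
  obtain p where p: "triple_ok d p" "tmult d X Y = tclass d p" "aa d p = aa d t1 \<circ> aa d t2"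
    using tmult_tclass_obtain[OF d t(1) t(3)] t by metis
  show "X \<otimes>\<^bsub>Thompson d\<^esub> Y \<in> carrier (Thompson d)"
    using p Thompson_carrierI by (simp add: Thompson_mult)
  show "aa d (SOME t. t \<in> X \<otimes>\<^bsub>Thompson d\<^esub> Y) = aa d (SOME t. t \<in> X) \<circ> aa d (SOME t. t \<in> Y)"
    using p t aa_some_tclass[OF d1] by (simp add: Thompson_mult)
qed

lemma Thompson_one_aa: "aa d (SOME t. t \<in> \<one>\<^bsub>Thompson d\<^esub>) = id" if "d \<ge> 1"
  using aa_some_tclass[OF that triple_ok_root] aa_identity[OF complete_subtree_root]
  by (simp add: Thompson_one)

lemma bij_betw_Thompson_AAut:
  assumes d: "d \<ge> 2"
  shows "bij_betw (\<lambda>X. aa d (SOME t. t \<in> X)) (carrier (Thompson d)) (AAut d)"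
proof (rule bij_betw_imageI)
  have d1: "d \<ge> 1" using d by simp
  show "inj_on (\<lambda>X. aa d (SOME t. t \<in> X)) (carrier (Thompson d))"
  proof (rule inj_onI)
    fix X Y assume "X \<in> carrier (Thompson d)" "Y \<in> carrier (Thompson d)"
      and e: "aa d (SOME t. t \<in> X) = aa d (SOME t. t \<in> Y)"
    then obtain t1 t2 where t: "triple_ok d t1" "X = tclass d t1" "triple_ok d t2" "Y = tclass d t2"
      by (metis Thompson_carrierE)
    show "X = Y" using e t tclass_eq_iff_aa_eq[OF d t(1) t(3)] aa_some_tclass[OF d1] by simp
  qed
  show "(\<lambda>X. aa d (SOME t. t \<in> X)) ` carrier (Thompson d) = AAut d"
  proof
    show "(\<lambda>X. aa d (SOME t. t \<in> X)) ` carrier (Thompson d) \<subseteq> AAut d"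
      using aa_some_tclass[OF d1] aa_in_AAut by (auto elim!: Thompson_carrierE)
    show "AAut d \<subseteq> (\<lambda>X. aa d (SOME t. t \<in> X)) ` carrier (Thompson d)"
    proof
      fix F assume "F \<in> AAut d"
      then obtain t where t: "triple_ok d t" "aa d t = F" by (rule AAut_obtain_triple)
      then show "F \<in> (\<lambda>X. aa d (SOME t. t \<in> X)) ` carrier (Thompson d)"
        using aa_some_tclass[OF d1 t(1)] Thompson_carrierI[OF t(1)] by force
    qed
  qed
qed

lemma group_Thompson:
  assumes d: "d \<ge> 2"
  shows "group (Thompson d)"
proof -
  have d1: "d \<ge> 1" using d by simp
  let ?\<Phi> = "\<lambda>X. aa d (SOME t. t \<in> X)"
  have bij: "bij_betw ?\<Phi> (carrier (Thompson d)) (carrier (AAutG d))"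
    using bij_betw_Thompson_AAut[OF d] by (simp add: AAutG_def)
  show ?thesis
  proof (rule group_pullback[OF group_AAutG[OF d1] bij])
    show "X \<otimes>\<^bsub>Thompson d\<^esub> Y \<in> carrier (Thompson d)"
      if "X \<in> carrier (Thompson d)" "Y \<in> carrier (Thompson d)" for X Y
      using Thompson_mult_closed_aa(1)[OF d that] .
    show "?\<Phi> (X \<otimes>\<^bsub>Thompson d\<^esub> Y) = ?\<Phi> X \<otimes>\<^bsub>AAutG d\<^esub> ?\<Phi> Y"
      if "X \<in> carrier (Thompson d)" "Y \<in> carrier (Thompson d)" for X Y
      using Thompson_mult_closed_aa(2)[OF d that] by (simp add: AAutG_def)
    show "\<one>\<^bsub>Thompson d\<^esub> \<in> carrier (Thompson d)"
      using Thompson_carrierI[OF triple_ok_root] by (simp add: Thompson_one)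
    show "?\<Phi> \<one>\<^bsub>Thompson d\<^esub> = \<one>\<^bsub>AAutG d\<^esub>"
      using Thompson_one_aa[OF d1] by (simp add: AAutG_def)
  qed
qed

theorem mainTheorem1:
  fixes d :: nat
  assumes "d \<ge> 2"
  shows "group (Thompson d)
    \<and> (\<forall>X\<in>carrier (Thompson d). \<forall>Y\<in>carrier (Thompson d).
          (\<exists>Tm f T g Tp. (Tm, f, T) \<in> X \<and> (T, g, Tp) \<in> Y)
        \<and> (\<forall>Tm f T g Tp. (Tm, f, T) \<in> X \<longrightarrow> (T, g, Tp) \<in> Y \<longrightarrow>
             X \<otimes>\<^bsub>Thompson d\<^esub> Y = tclass d (Tm, wr_mult (nleaves d T) f g, Tp)))
    \<and> group (AAutG d)
    \<and> (\<forall>X\<in>carrier (Thompson d). \<forall>t\<in>X. \<forall>t'\<in>X. aa d t = aa d t')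
    \<and> (\<lambda>X. aa d (SOME t. t \<in> X)) \<in> iso (Thompson d) (AAutG d)"
proof -
  have d: "d \<ge> 2" and d1: "d \<ge> 1" using assms by simp_all
  have bij: "bij_betw (\<lambda>X. aa d (SOME t. t \<in> X)) (carrier (Thompson d)) (carrier (AAutG d))"
    using bij_betw_Thompson_AAut[OF d] by (simp add: AAutG_def)
  have hom: "(\<lambda>X. aa d (SOME t. t \<in> X)) \<in> hom (Thompson d) (AAutG d)"
    using bij_betw_apply[OF bij] Thompson_mult_closed_aa(2)[OF d] by (intro homI) (simp_all add: AAutG_def)
  have "group (Thompson d)" using group_Thompson[OF d] .
  moreover have "\<exists>Tm f T g Tp. (Tm, f, T) \<in> X \<and> (T, g, Tp) \<in> Y"
    if "X \<in> carrier (Thompson d)" "Y \<in> carrier (Thompson d)" for X Y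
    using that tclass_common_middle[OF d1] by (metis Thompson_carrierE)
  moreover have "X \<otimes>\<^bsub>Thompson d\<^esub> Y = tclass d (Tm, wr_mult (nleaves d T) f g, Tp)"
    if "X \<in> carrier (Thompson d)" "Y \<in> carrier (Thompson d)" "(Tm, f, T) \<in> X" "(T, g, Tp) \<in> Y"
    for X Y Tm f T g Tp
    using that tmult_tclass[OF d] by (metis Thompson_carrierE Thompson_mult)
  moreover have "aa d t = aa d t'" if "X \<in> carrier (Thompson d)" "t \<in> X" "t' \<in> X" for X t t'
    using that tclass_triple_ok_aa[OF d1] by (metis Thompson_carrierE)
  ultimately show ?thesis using group_AAutG[OF d1] isoI[OF hom bij] by blast
qed

end
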